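(* Let $\beta>n/2$ and $\phi_\beta(r)=(1+r^2)^{-\beta}$ for $r\ge0$. Let $X=\{\mathbf{x}_j: j\in\mathbb{N}\}\subset\mathbb{R}^n$ be a set of distinct points with $\delta(X)=\inf_{j\neq k}|\mathbf{x}_j-\mathbf{x}_k|>0$ and such that the linear span of $X$ has dimension $d$, $1\le d\le n$, and let $\mathbf{S}_X(\phi_\beta)=\big[\phi_\beta(|\mathbf{x}_j-\mathbf{x}_k|)\big]_{j,k\in\mathbb{N}}$. (i) $\mathbf{S}_X(\phi_\beta)$ defines a bounded self-adjoint operator on $\ell^2(\mathbb{N})$ with $$\|\mathbf{S}_X(\phi_\beta)\|\le 1 + \frac{d(5^d -1)\, B\left(\beta-\frac d2,\,\frac d2\right)}{2 \left[\delta(X)\right]^d}.$$ (ii) If $n\ge 2$, $\mathbf{S}_X(\phi_\beta)$ defines a bounded invertible operator on $\ell^2(\mathbb{N})$. If $n=d=1$ and $\delta(X) > 2 B\left(\beta- \frac 12, \frac 12\right)$, then $\mathbf{S}_X(\phi_\beta)$ defines a bounded invertible operator on $\ell^2(\mathbb{N})$.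
   Context: $B$ denotes the Euler beta function. *)

theory Defs
  imports "HOL-Analysis.Analysis"
begin

definition l2 :: "(nat \<Rightarrow> complex) set" where
  "l2 = {a. summable (\<lambda>k. (cmod (a k))\<^sup>2)}"

definition l2norm :: "(nat \<Rightarrow> complex) \<Rightarrow> real" where
  "l2norm a = sqrt (\<Sum>k. (cmod (a k))\<^sup>2)"

definition l2inner :: "(nat \<Rightarrow> complex) \<Rightarrow> (nat \<Rightarrow> complex) \<Rightarrow> complex" where
  "l2inner a b = (\<Sum>k. a k * cnj (b k))"

definition mat_apply :: "(nat \<Rightarrow> nat \<Rightarrow> complex) \<Rightarrow> (nat \<Rightarrow> complex) \<Rightarrow> (nat \<Rightarrow> complex)" where
  "mat_apply M a = (\<lambda>j. \<Sum>k. M j k * a k)"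

definition bounded_mat_op :: "(nat \<Rightarrow> nat \<Rightarrow> complex) \<Rightarrow> real \<Rightarrow> bool" where
  "bounded_mat_op M C \<longleftrightarrow>
     (\<forall>a\<in>l2. (\<forall>j. summable (\<lambda>k. norm (M j k * a k)))
            \<and> mat_apply M a \<in> l2
            \<and> l2norm (mat_apply M a) \<le> C * l2norm a)"

definition selfadjoint_mat_op :: "(nat \<Rightarrow> nat \<Rightarrow> complex) \<Rightarrow> bool" where
  "selfadjoint_mat_op M \<longleftrightarrow>
     (\<forall>a\<in>l2. \<forall>b\<in>l2. l2inner (mat_apply M a) b = l2inner a (mat_apply M b))"

definition invertible_mat_op :: "(nat \<Rightarrow> nat \<Rightarrow> complex) \<Rightarrow> bool" where
  "invertible_mat_op M \<longleftrightarrow>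
     (\<exists>C. bounded_mat_op M C)
     \<and> bij_betw (mat_apply M) l2 l2
     \<and> (\<exists>c>0. \<forall>a\<in>l2. c * l2norm a \<le> l2norm (mat_apply M a))"

definition phi_beta :: "real \<Rightarrow> real \<Rightarrow> real" where
  "phi_beta \<beta> r = (1 + r\<^sup>2) powr (-\<beta>)"

definition sep_dist :: "(nat \<Rightarrow> 'a::metric_space) \<Rightarrow> real" where
  "sep_dist x = Inf {dist (x j) (x k) | j k. j \<noteq> k}"

definition S_mat :: "real \<Rightarrow> (nat \<Rightarrow> real ^ 'n) \<Rightarrow> nat \<Rightarrow> nat \<Rightarrow> complex" where
  "S_mat \<beta> x j k = complex_of_real (phi_beta \<beta> (norm (x j - x k)))"

end

theory Submission
  imports Defs
begin

text \<open>
  The Schur test bounds the norm of a symmetric nonnegative matrix by its largest row sum; the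
  diagonal contributes phi_beta 0 = 1. For the off-diagonal part write
  phi_beta r = Gamma(beta)^-1 * integral over t > 0 of t^(beta-1) e^(-t) e^(-t r^2).
  A volume packing argument in the d-dimensional span of the points shows that at most
  (5^d - 1) (sqrt u / delta)^d of them lie within distance sqrt u of a given one; integrating
  this counting bound gives sum_k e^(-t |x_j - x_k|^2) <= const * t^(-d/2), and integrating
  once more in t produces the Beta function.

  Invertibility is proved in every dimension. The Gaussian matrices [e^(-t |x_j - x_k|^2)] are positive semidefinite (factor out
  e^(-t |x_j|^2) e^(-t |x_k|^2) and expand e^(2t <x_j, x_k>) into powers of the Gram matrix), and
  for t beyond some T they are diagonally dominant, hence at least 1/2 as quadratic forms.
  Averaging over t in [T, T + 1] bounds the quadratic forms of the phi_beta matrix below by some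
  c > 0. A bounded symmetric operator with such a coercive form is invertible: the Richardson
  iteration a |-> a + (c / C^2) (b - S a) contracts in l2.
\<close>

section \<open>The sequence space l2\<close>

lemma l2_summable: "a \<in> l2 \<Longrightarrow> summable (\<lambda>k. (cmod (a k))\<^sup>2)"
  by (simp add: l2_def)

lemma l2norm_nonneg: "a \<in> l2 \<Longrightarrow> l2norm a \<ge> 0"
  by (simp add: l2norm_def l2_summable suminf_nonneg)

lemma l2norm_power2: "a \<in> l2 \<Longrightarrow> (l2norm a)\<^sup>2 = (\<Sum>k. (cmod (a k))\<^sup>2)"
  by (simp add: l2norm_def l2_summable suminf_nonneg)

lemma L2_set_le_l2norm: "a \<in> l2 \<Longrightarrow> L2_set (\<lambda>k. cmod (a k)) {..<n} \<le> l2norm a"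
  unfolding L2_set_def l2norm_def
  by (intro real_sqrt_le_mono sum_le_suminf l2_summable) auto

lemma l2_partial_sums_bounded:
  assumes "\<And>n. L2_set (\<lambda>k. cmod (a k)) {..<n} \<le> B"
  shows "a \<in> l2" and "l2norm a \<le> B"
proof -
  have B: "B \<ge> 0" using assms[of 0] by simp
  have partial: "(\<Sum>k<n. (cmod (a k))\<^sup>2) \<le> B\<^sup>2" for n
    using assms[of n] by (simp add: L2_set_def sqrt_le_D)
  have summable: "summable (\<lambda>k. (cmod (a k))\<^sup>2)"
    by (rule summableI_nonneg_bounded[OF _ partial]) auto
  then show "a \<in> l2" by (simp add: l2_def)
  have "(\<Sum>k. (cmod (a k))\<^sup>2) \<le> B\<^sup>2" by (rule suminf_le_const[OF summable partial])
  then have "l2norm a \<le> sqrt (B\<^sup>2)"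
    unfolding l2norm_def by (rule real_sqrt_le_mono)
  then show "l2norm a \<le> B"
    using B by simp
qed

lemma l2_dominated:
  assumes a: "a \<in> l2" and b: "b \<in> l2" and le: "\<And>k. cmod (c k) \<le> cmod (a k) + cmod (b k)"
  shows "c \<in> l2" and "l2norm c \<le> l2norm a + l2norm b"
proof -
  have "L2_set (\<lambda>k. cmod (c k)) {..<n} \<le> l2norm a + l2norm b" for n
  proof -
    have "L2_set (\<lambda>k. cmod (c k)) {..<n} \<le> L2_set (\<lambda>k. cmod (a k) + cmod (b k)) {..<n}"
      by (rule L2_set_mono) (use le in auto)
    also have "\<dots> \<le> L2_set (\<lambda>k. cmod (a k)) {..<n} + L2_set (\<lambda>k. cmod (b k)) {..<n}"
      by (rule L2_set_triangle_ineq)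
    also have "\<dots> \<le> l2norm a + l2norm b"
      by (intro add_mono L2_set_le_l2norm a b)
    finally show ?thesis .
  qed
  then show "c \<in> l2" "l2norm c \<le> l2norm a + l2norm b"
    by (rule l2_partial_sums_bounded)+
qed

lemma l2_add:
  assumes "a \<in> l2" "b \<in> l2"
  shows "(\<lambda>k. a k + b k) \<in> l2" and "l2norm (\<lambda>k. a k + b k) \<le> l2norm a + l2norm b"
  by (rule l2_dominated[OF assms norm_triangle_ineq])+

lemma l2_diff:
  assumes "a \<in> l2" "b \<in> l2"
  shows "(\<lambda>k. a k - b k) \<in> l2" and "l2norm (\<lambda>k. a k - b k) \<le> l2norm a + l2norm b"
  by (rule l2_dominated[OF assms norm_triangle_ineq4])+

lemma l2_scale:
  assumes a: "a \<in> l2"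
  shows "(\<lambda>k. e * a k) \<in> l2" and "l2norm (\<lambda>k. e * a k) = cmod e * l2norm a"
proof -
  have sq: "(cmod (e * a k))\<^sup>2 = (cmod e)\<^sup>2 * (cmod (a k))\<^sup>2" for k
    by (simp add: norm_mult power_mult_distrib)
  show "(\<lambda>k. e * a k) \<in> l2"
    using summable_mult[OF l2_summable[OF a], of "(cmod e)\<^sup>2"] by (simp add: l2_def sq)
  show "l2norm (\<lambda>k. e * a k) = cmod e * l2norm a"
    by (simp add: l2norm_def sq suminf_mult[OF l2_summable[OF a]] real_sqrt_mult)
qed

lemma l2_zero [simp]: "(\<lambda>k. 0) \<in> l2" "l2norm (\<lambda>k. 0) = 0"
  by (simp_all add: l2_def l2norm_def)

lemma norm_le_l2norm: "a \<in> l2 \<Longrightarrow> cmod (a k) \<le> l2norm a"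
  using L2_set_le_l2norm[of a "Suc k"] member_le_L2_set[of "{..<Suc k}" k "\<lambda>k. cmod (a k)"]
  by simp

lemma l2norm_eq_0_iff: "a \<in> l2 \<Longrightarrow> l2norm a = 0 \<longleftrightarrow> a = (\<lambda>k. 0)"
  using norm_le_l2norm[of a] by (fastforce simp: l2norm_nonneg antisym)

lemma summable_l2_mult:
  assumes a: "a \<in> l2" and b: "b \<in> l2"
  shows "summable (\<lambda>k. cmod (a k) * cmod (b k))"
    and "(\<Sum>k. cmod (a k) * cmod (b k)) \<le> l2norm a * l2norm b"
proof -
  have partial: "(\<Sum>k<n. cmod (a k) * cmod (b k)) \<le> l2norm a * l2norm b" for n
  proof -
    have "(\<Sum>k<n. cmod (a k) * cmod (b k))
        \<le> L2_set (\<lambda>k. cmod (a k)) {..<n} * L2_set (\<lambda>k. cmod (b k)) {..<n}"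
      using L2_set_mult_ineq[of "\<lambda>k. cmod (a k)" "\<lambda>k. cmod (b k)" "{..<n}"] by simp
    also have "\<dots> \<le> l2norm a * l2norm b"
      by (intro mult_mono L2_set_le_l2norm a b L2_set_nonneg l2norm_nonneg)
    finally show ?thesis .
  qed
  show summable: "summable (\<lambda>k. cmod (a k) * cmod (b k))"
    by (rule summableI_nonneg_bounded[OF _ partial]) auto
  show "(\<Sum>k. cmod (a k) * cmod (b k)) \<le> l2norm a * l2norm b"
    by (rule suminf_le_const[OF summable partial])
qed

lemma summable_l2inner:
  "a \<in> l2 \<Longrightarrow> b \<in> l2 \<Longrightarrow> summable (\<lambda>k. norm (a k * cnj (b k)))"
  using summable_l2_mult(1) by (simp add: norm_mult)

lemma l2inner_Cauchy_Schwarz: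
  assumes a: "a \<in> l2" and b: "b \<in> l2"
  shows "cmod (l2inner a b) \<le> l2norm a * l2norm b"
proof -
  have "cmod (l2inner a b) \<le> (\<Sum>k. norm (a k * cnj (b k)))"
    unfolding l2inner_def by (rule summable_norm[OF summable_l2inner[OF a b]])
  also have "\<dots> \<le> l2norm a * l2norm b"
    using summable_l2_mult(2)[OF a b] by (simp add: norm_mult)
  finally show ?thesis .
qed

lemma l2inner_diff_left:
  assumes "p \<in> l2" "q \<in> l2" "r \<in> l2"
  shows "l2inner (\<lambda>k. p k - q k) r = l2inner p r - l2inner q r"
  unfolding l2inner_def left_diff_distrib
  by (rule suminf_diff[OF summable_norm_cancel[OF summable_l2inner[OF assms(1,3)]]
        summable_norm_cancel[OF summable_l2inner[OF assms(2,3)]], symmetric])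

lemma l2inner_diff_right:
  assumes "p \<in> l2" "r \<in> l2" "s \<in> l2"
  shows "l2inner p (\<lambda>k. r k - s k) = l2inner p r - l2inner p s"
  unfolding l2inner_def complex_cnj_diff right_diff_distrib
  by (rule suminf_diff[OF summable_norm_cancel[OF summable_l2inner[OF assms(1,2)]]
        summable_norm_cancel[OF summable_l2inner[OF assms(1,3)]], symmetric])

lemma l2inner_scale_left:
  assumes "a \<in> l2" "b \<in> l2"
  shows "l2inner (\<lambda>k. e * a k) b = e * l2inner a b"
  unfolding l2inner_def mult.assoc
  by (rule suminf_mult[OF summable_norm_cancel[OF summable_l2inner[OF assms]]])

lemma l2norm_diff_power2:
  assumes a: "a \<in> l2" and b: "b \<in> l2"
  shows "(l2norm (\<lambda>k. a k - b k))\<^sup>2 = (l2norm a)\<^sup>2 - 2 * Re (l2inner b a) + (l2norm b)\<^sup>2"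
proof -
  have pointwise: "(cmod (a k - b k))\<^sup>2 = (cmod (a k))\<^sup>2 - 2 * Re (b k * cnj (a k)) + (cmod (b k))\<^sup>2"
    for k by (simp add: cmod_power2 power2_diff)
  have inner: "summable (\<lambda>k. b k * cnj (a k))"
    by (rule summable_norm_cancel[OF summable_l2inner[OF b a]])
  have sa: "summable (\<lambda>k. (cmod (a k))\<^sup>2)" and sb: "summable (\<lambda>k. (cmod (b k))\<^sup>2)"
    and sab: "summable (\<lambda>k. 2 * Re (b k * cnj (a k)))"
    by (intro l2_summable a b summable_mult summable_Re inner)+
  have "(\<Sum>k. (cmod (a k - b k))\<^sup>2)
      = (\<Sum>k. (cmod (a k))\<^sup>2 - 2 * Re (b k * cnj (a k))) + (\<Sum>k. (cmod (b k))\<^sup>2)"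
    unfolding pointwise by (rule suminf_add[OF summable_diff[OF sa sab] sb, symmetric])
  also have "(\<Sum>k. (cmod (a k))\<^sup>2 - 2 * Re (b k * cnj (a k)))
      = (\<Sum>k. (cmod (a k))\<^sup>2) - (\<Sum>k. 2 * Re (b k * cnj (a k)))"
    by (rule suminf_diff[OF sa sab, symmetric])
  also have "(\<Sum>k. 2 * Re (b k * cnj (a k))) = 2 * Re (l2inner b a)"
    unfolding l2inner_def Re_suminf[OF inner] by (rule suminf_mult[OF summable_Re[OF inner]])
  finally show ?thesis
    by (simp add: l2norm_power2 a b l2_diff)
qed

lemma l2_truncation:
  assumes a: "a \<in> l2"
  shows "(\<lambda>k. if k < N then a k else 0) \<in> l2"
    and "(l2norm (\<lambda>k. if k < N then a k else 0))\<^sup>2 = (\<Sum>k<N. (cmod (a k))\<^sup>2)"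
    and "(\<lambda>N. l2norm (\<lambda>k. a k - (if k < N then a k else 0))) \<longlonglongrightarrow> 0"
proof -
  define t where "t N = (\<lambda>k. if k < N then a k else 0)" for N
  have finite_sum: "(\<Sum>k. (cmod (t N k))\<^sup>2) = (\<Sum>k<N. (cmod (a k))\<^sup>2)" for N
    by (subst suminf_finite[of "{..<N}"]) (auto simp: t_def)
  have summable: "summable (\<lambda>k. (cmod (t N k))\<^sup>2)" for N
    by (rule summable_finite[of "{..<N}"]) (auto simp: t_def)
  then have trunc: "t N \<in> l2" for N
    by (simp add: l2_def)
  then show "(\<lambda>k. if k < N then a k else 0) \<in> l2"
    by (simp add: t_def)
  show "(l2norm (\<lambda>k. if k < N then a k else 0))\<^sup>2 = (\<Sum>k<N. (cmod (a k))\<^sup>2)"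
    using l2norm_power2[OF trunc] finite_sum by (simp add: t_def)
  have tail: "(l2norm (\<lambda>k. a k - t N k))\<^sup>2 = (\<Sum>k. (cmod (a k))\<^sup>2) - (\<Sum>k<N. (cmod (a k))\<^sup>2)" for N
  proof -
    have "(l2norm (\<lambda>k. a k - t N k))\<^sup>2 = (\<Sum>k. (cmod (a k))\<^sup>2 - (cmod (t N k))\<^sup>2)"
      unfolding l2norm_power2[OF l2_diff(1)[OF a trunc]]
      by (intro arg_cong[where f = suminf] ext) (simp add: t_def)
    also have "\<dots> = (\<Sum>k. (cmod (a k))\<^sup>2) - (\<Sum>k<N. (cmod (a k))\<^sup>2)"
      unfolding finite_sum[symmetric] by (rule suminf_diff[OF l2_summable[OF a] summable, symmetric])
    finally show ?thesis .
  qed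
  have "(\<lambda>N. (\<Sum>k. (cmod (a k))\<^sup>2) - (\<Sum>k<N. (cmod (a k))\<^sup>2))
      \<longlonglongrightarrow> (\<Sum>k. (cmod (a k))\<^sup>2) - (\<Sum>k. (cmod (a k))\<^sup>2)"
    by (intro tendsto_diff tendsto_const summable_LIMSEQ l2_summable a)
  then have "(\<lambda>N. sqrt ((l2norm (\<lambda>k. a k - t N k))\<^sup>2)) \<longlonglongrightarrow> sqrt 0"
    unfolding tail by (intro tendsto_real_sqrt) simp
  then show "(\<lambda>N. l2norm (\<lambda>k. a k - (if k < N then a k else 0))) \<longlonglongrightarrow> 0"
    using l2norm_nonneg[OF l2_diff(1)[OF a trunc]] by (simp add: t_def)
qed

lemma l2_limit_of_geometric_steps:
  assumes A: "\<And>n. A n \<in> l2" and q: "0 \<le> q" "q < 1"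
    and step: "\<And>n. l2norm (\<lambda>k. A (Suc n) k - A n k) \<le> B * q ^ n"
  obtains a where "a \<in> l2" and "\<And>n. l2norm (\<lambda>k. a k - A n k) \<le> B * q ^ n / (1 - q)"
proof -
  have diff: "(\<lambda>k. A p k - A n k) \<in> l2" for p n by (rule l2_diff(1)[OF A A])
  have B: "B \<ge> 0"
    using step[of 0] l2norm_nonneg[OF diff[of "Suc 0" 0]] by simp
  have "l2norm (\<lambda>k. A p k - A n k) \<le> B * (q ^ n - q ^ p) / (1 - q)" if "n \<le> p" for n p
    using that
  proof (induction p rule: dec_induct)
    case (step p)
    have split: "(\<lambda>k. A (Suc p) k - A n k) = (\<lambda>k. (A (Suc p) k - A p k) + (A p k - A n k))"
      by auto
    have "l2norm (\<lambda>k. A (Suc p) k - A n k)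
        \<le> l2norm (\<lambda>k. A (Suc p) k - A p k) + l2norm (\<lambda>k. A p k - A n k)"
      unfolding split by (rule l2_add(2)[OF diff diff])
    also have "\<dots> \<le> B * q ^ p + B * (q ^ n - q ^ p) / (1 - q)"
      using assms(4)[of p] step.IH by simp
    also have "\<dots> = B * (q ^ n - q ^ Suc p) / (1 - q)"
      using q by (simp add: field_simps)
    finally show ?case .
  qed simp
  moreover have "B * (q ^ n - q ^ p) / (1 - q) \<le> B * q ^ n / (1 - q)" for n p
    using B q by (intro divide_right_mono mult_left_mono) auto
  ultimately have far: "l2norm (\<lambda>k. A p k - A n k) \<le> B * q ^ n / (1 - q)" if "n \<le> p" for n p
    using that order_trans by blast
  have "summable (\<lambda>i. A (Suc i) k - A i k)" for k
  proof (rule summable_comparison_test'[where N = 0])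
    show "summable (\<lambda>i. B * q ^ i)"
      using q by (intro summable_mult summable_geometric) simp
    show "norm (A (Suc i) k - A i k) \<le> B * q ^ i" for i
      using norm_le_l2norm[OF diff[of "Suc i" i], of k] step[of i] by simp
  qed
  then have "(\<lambda>p. A 0 k + (\<Sum>i<p. A (Suc i) k - A i k)) \<longlonglongrightarrow> A 0 k + (\<Sum>i. A (Suc i) k - A i k)"
    for k by (intro tendsto_add tendsto_const summable_LIMSEQ)
  moreover have "A 0 k + (\<Sum>i<p. A (Suc i) k - A i k) = A p k" for p k
    using sum_lessThan_telescope[of "\<lambda>i. A i k" p] by simp
  ultimately have lim: "(\<lambda>p. A p k) \<longlonglongrightarrow> A 0 k + (\<Sum>i. A (Suc i) k - A i k)" for k
    by simp
  define a where "a k = A 0 k + (\<Sum>i. A (Suc i) k - A i k)" for k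
  have close: "(\<lambda>k. a k - A n k) \<in> l2 \<and> l2norm (\<lambda>k. a k - A n k) \<le> B * q ^ n / (1 - q)" for n
  proof -
    have bound: "L2_set (\<lambda>k. cmod (a k - A n k)) {..<K} \<le> B * q ^ n / (1 - q)" for K
    proof (rule LIMSEQ_le_const2)
      show "(\<lambda>p. L2_set (\<lambda>k. cmod (A p k - A n k)) {..<K})
          \<longlonglongrightarrow> L2_set (\<lambda>k. cmod (a k - A n k)) {..<K}"
        unfolding L2_set_def a_def
        by (intro tendsto_real_sqrt tendsto_sum tendsto_power tendsto_norm tendsto_diff tendsto_const lim)
      have "L2_set (\<lambda>k. cmod (A p k - A n k)) {..<K} \<le> B * q ^ n / (1 - q)" if "n \<le> p" for p
        using L2_set_le_l2norm[OF diff] far[OF that] by (rule order_trans)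
      then show "\<exists>N. \<forall>p\<ge>N. L2_set (\<lambda>k. cmod (A p k - A n k)) {..<K} \<le> B * q ^ n / (1 - q)"
        by blast
    qed
    show ?thesis
      using l2_partial_sums_bounded[OF bound] by blast
  qed
  have "(\<lambda>k. (a k - A 0 k) + A 0 k) \<in> l2"
    by (rule l2_add(1)[OF conjunct1[OF close] A])
  then have "a \<in> l2"
    by simp
  then show ?thesis
    using close by (intro that) auto
qed

lemma suminf_eq_infsum_nat:
  fixes g :: "nat \<Rightarrow> 'a::{banach}"
  assumes "g summable_on UNIV"
  shows "suminf g = infsum g UNIV"
proof -
  have "(g has_sum infsum g UNIV) UNIV" using assms by (rule has_sum_infsum)
  then have "g sums infsum g UNIV" by (rule has_sum_imp_sums)
  then show ?thesis by (rule sums_unique[symmetric])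
qed

lemma double_suminf_swap:
  fixes f :: "nat \<Rightarrow> nat \<Rightarrow> complex"
  assumes rows: "\<And>j. summable (\<lambda>k. norm (f j k))"
    and total: "summable (\<lambda>j. \<Sum>k. norm (f j k))"
  shows "(\<Sum>j. \<Sum>k. f j k) = (\<Sum>k. \<Sum>j. f j k)"
proof -
  have N: "(\<lambda>(j,k). norm (f j k)) summable_on Sigma UNIV (\<lambda>_. UNIV)"
  proof (rule summable_on_SigmaI[where g = "\<lambda>j. \<Sum>k. norm (f j k)"])
    fix j :: nat
    show "((\<lambda>k. case (j, k) of (j, k) \<Rightarrow> norm (f j k)) has_sum (\<Sum>k. norm (f j k))) UNIV"
      using rows[of j] by (auto intro!: sums_nonneg_imp_has_sum summable_sums)
  next
    show "(\<lambda>j. \<Sum>k. norm (f j k)) summable_on UNIV"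
      by (rule summable_nonneg_imp_summable_on[OF total]) (auto intro: suminf_nonneg rows)
  qed auto
  have S: "(\<lambda>(j,k). f j k) summable_on UNIV \<times> UNIV"
    by (rule abs_summable_summable) (use N in \<open>simp add: case_prod_unfold\<close>)
  have S': "(\<lambda>(k,j). f j k) summable_on UNIV \<times> UNIV"
    using S by (subst summable_on_swap) (simp add: case_prod_unfold)
  have in1: "(\<lambda>k. f j k) summable_on UNIV" for j
    using summable_on_SigmaD1[of "\<lambda>j k. f j k" UNIV "\<lambda>_. UNIV" j] S by simp
  have in2: "(\<lambda>j. f j k) summable_on UNIV" for k
    using summable_on_SigmaD1[of "\<lambda>k j. f j k" UNIV "\<lambda>_. UNIV" k] S' by simp
  have out1: "(\<lambda>j. infsum (\<lambda>k. f j k) UNIV) summable_on UNIV"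
    using summable_on_SigmaD[of "\<lambda>(j,k). f j k" UNIV "\<lambda>_. UNIV"] S in1 by simp
  have out2: "(\<lambda>k. infsum (\<lambda>j. f j k) UNIV) summable_on UNIV"
    using summable_on_SigmaD[of "\<lambda>(k,j). f j k" UNIV "\<lambda>_. UNIV"] S' in2 by simp
  have "(\<Sum>j. \<Sum>k. f j k) = (\<Sum>j. infsum (\<lambda>k. f j k) UNIV)"
    by (simp add: suminf_eq_infsum_nat[OF in1])
  also have "\<dots> = infsum (\<lambda>j. infsum (\<lambda>k. f j k) UNIV) UNIV"
    by (rule suminf_eq_infsum_nat[OF out1])
  also have "\<dots> = infsum (\<lambda>k. infsum (\<lambda>j. f j k) UNIV) UNIV"
    by (rule infsum_swap_banach) (use S in simp)
  also have "\<dots> = (\<Sum>k. infsum (\<lambda>j. f j k) UNIV)"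
    by (rule suminf_eq_infsum_nat[OF out2, symmetric])
  also have "\<dots> = (\<Sum>k. \<Sum>j. f j k)"
    by (simp add: suminf_eq_infsum_nat[OF in2])
  finally show ?thesis .
qed

section \<open>The Schur test\<close>

locale schur_test =
  fixes m :: "nat \<Rightarrow> nat \<Rightarrow> real" and C :: real
  assumes nonneg: "m j k \<ge> 0"
    and symmetric: "m j k = m k j"
    and row_sum_le: "finite F \<Longrightarrow> (\<Sum>k\<in>F. m j k) \<le> C"
begin

definition M :: "nat \<Rightarrow> nat \<Rightarrow> complex" where
  "M j k = complex_of_real (m j k)"

lemma C_nonneg: "C \<ge> 0"
  using row_sum_le[of "{}"] by simp

lemma entry_le: "m j k \<le> C"
  using row_sum_le[of "{k}" j] by simp

lemma summable_row: "summable (\<lambda>k. m j k)"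
  by (rule summableI_nonneg_bounded[OF nonneg row_sum_le]) simp

lemma summable_row_weighted: "a \<in> l2 \<Longrightarrow> summable (\<lambda>k. m j k * (cmod (a k))\<^sup>2)"
  by (rule summable_comparison_test'[OF summable_mult[OF l2_summable, of a C]])
     (auto simp: nonneg mult_right_mono entry_le)

lemma norm_M: "norm (M j k) = m j k"
  by (simp add: M_def nonneg)

lemma norm_M_mult: "norm (M j k * z) = m j k * cmod z"
  by (simp add: norm_mult norm_M)

lemma summable_row_norm:
  assumes a: "a \<in> l2"
  shows "summable (\<lambda>k. norm (M j k * a k))"
proof (rule summable_comparison_test'[where N = 0])
  show "summable (\<lambda>k. (m j k + m j k * (cmod (a k))\<^sup>2) / 2)"
    by (intro summable_divide summable_add summable_row summable_row_weighted a)
  have "cmod (a k) \<le> (1 + (cmod (a k))\<^sup>2) / 2" for k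
    using zero_le_power2[of "1 - cmod (a k)"] by (simp add: power2_eq_square algebra_simps)
  then have "m j k * cmod (a k) \<le> m j k * ((1 + (cmod (a k))\<^sup>2) / 2)" for k
    by (rule mult_left_mono[OF _ nonneg])
  moreover have "norm (norm (M j k * a k)) = m j k * cmod (a k)" for k
    by (simp add: norm_M_mult nonneg)
  ultimately show "norm (norm (M j k * a k)) \<le> (m j k + m j k * (cmod (a k))\<^sup>2) / 2" for k
    by (simp add: field_simps abs_mult nonneg)
qed

lemma summable_row_mult: "a \<in> l2 \<Longrightarrow> summable (\<lambda>k. M j k * a k)"
  by (rule summable_norm_cancel[OF summable_row_norm])

text \<open>Cauchy--Schwarz with the weights m j k, whose row sums are at most C.\<close>
lemma norm_mat_apply_power2_le:
  assumes a: "a \<in> l2"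
  shows "(cmod (mat_apply M a j))\<^sup>2 \<le> C * (\<Sum>k. m j k * (cmod (a k))\<^sup>2)"
proof -
  let ?Q = "\<Sum>k. m j k * (cmod (a k))\<^sup>2"
  have Q: "?Q \<ge> 0" by (intro suminf_nonneg summable_row_weighted a) (simp add: nonneg)
  have partial: "(\<Sum>k<n. m j k * cmod (a k)) \<le> sqrt (C * ?Q)" for n
  proof -
    have "(\<Sum>k<n. m j k * cmod (a k)) = (\<Sum>k<n. \<bar>sqrt (m j k)\<bar> * \<bar>sqrt (m j k) * cmod (a k)\<bar>)"
      by (rule sum.cong) (auto simp: nonneg abs_mult mult.assoc[symmetric])
    also have "\<dots> \<le> L2_set (\<lambda>k. sqrt (m j k)) {..<n} * L2_set (\<lambda>k. sqrt (m j k) * cmod (a k)) {..<n}"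
      by (rule L2_set_mult_ineq)
    also have "\<dots> = sqrt (\<Sum>k<n. m j k) * sqrt (\<Sum>k<n. m j k * (cmod (a k))\<^sup>2)"
      by (simp add: L2_set_def nonneg power_mult_distrib)
    also have "\<dots> \<le> sqrt C * sqrt ?Q"
      by (intro mult_mono real_sqrt_le_mono row_sum_le sum_le_suminf summable_row_weighted a)
         (auto simp: nonneg C_nonneg intro: sum_nonneg)
    finally show ?thesis by (simp add: real_sqrt_mult)
  qed
  have "cmod (mat_apply M a j) \<le> (\<Sum>k. m j k * cmod (a k))"
    using summable_norm[OF summable_row_norm[OF a]] by (simp add: mat_apply_def norm_M_mult)
  also have "\<dots> \<le> sqrt (C * ?Q)"
    by (rule suminf_le_const[OF _ partial]) (use summable_row_norm[OF a] in \<open>simp add: norm_M_mult\<close>)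
  finally have "(cmod (mat_apply M a j))\<^sup>2 \<le> (sqrt (C * ?Q))\<^sup>2"
    by (intro power_mono) auto
  then show ?thesis
    using C_nonneg Q by simp
qed

lemma sum_weighted_rows_le:
  assumes a: "a \<in> l2"
  shows "(\<Sum>j<J. \<Sum>k. m j k * (cmod (a k))\<^sup>2) \<le> C * (l2norm a)\<^sup>2"
proof -
  have "(\<Sum>j<J. \<Sum>k. m j k * (cmod (a k))\<^sup>2) = (\<Sum>k. \<Sum>j<J. m j k * (cmod (a k))\<^sup>2)"
    by (rule suminf_sum[OF summable_row_weighted[OF a], symmetric])
  also have "\<dots> \<le> (\<Sum>k. C * (cmod (a k))\<^sup>2)"
  proof (intro suminf_le summable_sum summable_row_weighted summable_mult l2_summable a)
    show "(\<Sum>j<J. m j k * (cmod (a k))\<^sup>2) \<le> C * (cmod (a k))\<^sup>2" for k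
      unfolding sum_distrib_right[symmetric] symmetric[of _ k] by (simp add: mult_right_mono row_sum_le)
  qed
  also have "\<dots> = C * (l2norm a)\<^sup>2"
    by (simp add: suminf_mult l2_summable a l2norm_power2)
  finally show ?thesis .
qed

lemma
  assumes a: "a \<in> l2"
  shows mat_apply_l2: "mat_apply M a \<in> l2"
    and l2norm_mat_apply_le: "l2norm (mat_apply M a) \<le> C * l2norm a"
proof -
  have "L2_set (\<lambda>j. cmod (mat_apply M a j)) {..<J} \<le> C * l2norm a" for J
  proof -
    have "(\<Sum>j<J. (cmod (mat_apply M a j))\<^sup>2) \<le> C * (\<Sum>j<J. \<Sum>k. m j k * (cmod (a k))\<^sup>2)"
      unfolding sum_distrib_left by (intro sum_mono norm_mat_apply_power2_le a)
    also have "\<dots> \<le> C * (C * (l2norm a)\<^sup>2)"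
      by (rule mult_left_mono[OF sum_weighted_rows_le[OF a] C_nonneg])
    also have "\<dots> = (C * l2norm a)\<^sup>2"
      by (simp add: power2_eq_square)
    finally have "L2_set (\<lambda>j. cmod (mat_apply M a j)) {..<J} \<le> sqrt ((C * l2norm a)\<^sup>2)"
      unfolding L2_set_def by (rule real_sqrt_le_mono)
    then show ?thesis
      using C_nonneg l2norm_nonneg[OF a] by simp
  qed
  then show "mat_apply M a \<in> l2" "l2norm (mat_apply M a) \<le> C * l2norm a"
    by (rule l2_partial_sums_bounded)+
qed

lemma bounded_mat_op_M: "bounded_mat_op M C"
  unfolding bounded_mat_op_def using summable_row_norm mat_apply_l2 l2norm_mat_apply_le by blast

lemma selfadjoint_mat_op_M: "selfadjoint_mat_op M"
  unfolding selfadjoint_mat_op_def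
proof (intro ballI)
  fix a b assume a: "a \<in> l2" and b: "b \<in> l2"
  define f where "f j k = M j k * a k * cnj (b j)" for j k
  have row: "summable (\<lambda>k. m j k * cmod (a k))" for j
    using summable_row_norm[OF a, of j] by (simp add: norm_M_mult)
  have norm_f: "norm (f j k) = m j k * cmod (a k) * cmod (b j)" for j k
    by (simp add: f_def norm_mult norm_M)
  have rows: "summable (\<lambda>k. norm (f j k))" for j
    unfolding norm_f by (intro summable_mult2 row)
  text \<open>The row sums of the absolute values are the entries of M applied to the sequence cmod a.\<close>
  define abs_a where "abs_a k = complex_of_real (cmod (a k))" for k
  have abs_a: "abs_a \<in> l2"
    using a by (simp add: abs_a_def l2_def)
  have "mat_apply M abs_a j = complex_of_real (\<Sum>k. m j k * cmod (a k))" for j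
    unfolding mat_apply_def M_def abs_a_def of_real_mult[symmetric]
    by (rule suminf_of_real[OF row, symmetric])
  then have "cmod (mat_apply M abs_a j) = (\<Sum>k. m j k * cmod (a k))" for j
    by (simp add: suminf_nonneg[OF row] nonneg)
  then have "(\<Sum>k. norm (f j k)) = cmod (b j) * cmod (mat_apply M abs_a j)" for j
    unfolding norm_f suminf_mult2[OF row, symmetric] by (simp add: mult.commute)
  then have total: "summable (\<lambda>j. \<Sum>k. norm (f j k))"
    using summable_l2_mult(1)[OF b mat_apply_l2[OF abs_a]] by simp
  have "l2inner (mat_apply M a) b = (\<Sum>j. \<Sum>k. f j k)"
    unfolding l2inner_def mat_apply_def f_def by (simp add: suminf_mult2[OF summable_row_mult[OF a]])
  also have "\<dots> = (\<Sum>k. \<Sum>j. f j k)"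
    by (rule double_suminf_swap[OF rows total])
  also have "\<dots> = l2inner a (mat_apply M b)"
    unfolding l2inner_def mat_apply_def
  proof (intro arg_cong[where f = suminf] ext)
    fix k
    have "(\<lambda>j. cnj (M k j * b j)) sums cnj (\<Sum>j. M k j * b j)"
      by (rule sums_cnj[THEN iffD2, OF summable_sums[OF summable_row_mult[OF b]]])
    then have "a k * cnj (\<Sum>j. M k j * b j) = (\<Sum>j. a k * cnj (M k j * b j))"
      by (simp add: sums_unique sums_mult)
    then show "(\<Sum>j. f j k) = a k * cnj (\<Sum>j. M k j * b j)"
      by (simp add: f_def M_def symmetric[of k] mult_ac)
  qed
  finally show "l2inner (mat_apply M a) b = l2inner a (mat_apply M b)" .
qed

lemma mat_apply_diff:
  assumes "a \<in> l2" "b \<in> l2"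
  shows "mat_apply M (\<lambda>k. a k - b k) = (\<lambda>j. mat_apply M a j - mat_apply M b j)"
  unfolding mat_apply_def right_diff_distrib
  by (intro ext suminf_diff[symmetric] summable_row_mult assms)

lemma mat_apply_add_scale:
  assumes a: "a \<in> l2" and b: "b \<in> l2"
  shows "mat_apply M (\<lambda>k. a k + e * b k) = (\<lambda>j. mat_apply M a j + e * mat_apply M b j)"
proof
  fix j
  have "mat_apply M (\<lambda>k. a k + e * b k) j = (\<Sum>k. M j k * a k + e * (M j k * b k))"
    by (simp add: mat_apply_def algebra_simps)
  also have "\<dots> = mat_apply M a j + e * mat_apply M b j"
    unfolding mat_apply_def
    by (simp add: suminf_add[OF summable_row_mult[OF a] summable_mult[OF summable_row_mult[OF b]], symmetric]
        suminf_mult[OF summable_row_mult[OF b]])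
  finally show "mat_apply M (\<lambda>k. a k + e * b k) j = mat_apply M a j + e * mat_apply M b j" .
qed

lemma mat_apply_zero [simp]: "mat_apply M (\<lambda>k. 0) = (\<lambda>j. 0)"
  by (simp add: mat_apply_def)

lemma l2inner_mat_apply_diff_le:
  assumes a: "a \<in> l2" and b: "b \<in> l2"
  shows "cmod (l2inner (mat_apply M a) a - l2inner (mat_apply M b) b)
    \<le> C * l2norm (\<lambda>k. a k - b k) * (l2norm a + l2norm b)"
proof -
  let ?d = "\<lambda>k. a k - b k"
  have d: "?d \<in> l2" by (rule l2_diff(1)[OF a b])
  have "l2inner (mat_apply M a) a - l2inner (mat_apply M b) b
      = l2inner (mat_apply M ?d) a + l2inner (mat_apply M b) ?d"
    by (simp add: mat_apply_diff a b l2inner_diff_left l2inner_diff_right mat_apply_l2)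
  also have "cmod \<dots> \<le> l2norm (mat_apply M ?d) * l2norm a + l2norm (mat_apply M b) * l2norm ?d"
    by (intro norm_triangle_le add_mono l2inner_Cauchy_Schwarz mat_apply_l2 a b d)
  also have "\<dots> \<le> (C * l2norm ?d) * l2norm a + (C * l2norm b) * l2norm ?d"
    by (intro add_mono mult_right_mono l2norm_mat_apply_le l2norm_nonneg a b d)
  finally show ?thesis by (simp add: algebra_simps)
qed

end

section \<open>Coercive kernels\<close>

locale coercive_schur_test = schur_test +
  fixes c :: real
  assumes c_pos: "c > 0"
    and finite_sections_lower: "\<And>N u. c * (\<Sum>j<N. (u j)\<^sup>2) \<le> (\<Sum>j<N. \<Sum>k<N. u j * u k * m j k)"
begin

lemma Re_l2inner_mat_apply_truncation:
  fixes a :: "nat \<Rightarrow> complex" and N :: nat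
  defines "t \<equiv> (\<lambda>k. if k < N then a k else 0)"
  shows "Re (l2inner (mat_apply M t) t) =
    (\<Sum>j<N. \<Sum>k<N. Re (a j) * Re (a k) * m j k) + (\<Sum>j<N. \<Sum>k<N. Im (a j) * Im (a k) * m j k)"
proof -
  have Mt: "mat_apply M t j = (\<Sum>k<N. M j k * a k)" for j
    unfolding mat_apply_def by (subst suminf_finite[of "{..<N}"]) (auto simp: t_def)
  have "l2inner (mat_apply M t) t = (\<Sum>j<N. mat_apply M t j * cnj (a j))"
    unfolding l2inner_def by (subst suminf_finite[of "{..<N}"]) (auto simp: t_def)
  also have "\<dots> = (\<Sum>j<N. \<Sum>k<N. M j k * a k * cnj (a j))"
    by (simp add: Mt sum_distrib_right)
  finally have "Re (l2inner (mat_apply M t) t)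
      = (\<Sum>j<N. \<Sum>k<N. m j k * (Re (a k) * Re (a j) + Im (a k) * Im (a j)))"
    by (simp add: M_def Re_sum distrib_left mult_ac)
  also have "\<dots> = (\<Sum>j<N. \<Sum>k<N. Re (a j) * Re (a k) * m j k) + (\<Sum>j<N. \<Sum>k<N. Im (a j) * Im (a k) * m j k)"
    by (simp add: sum.distrib[symmetric] algebra_simps)
  finally show ?thesis .
qed

lemma coercive:
  assumes a: "a \<in> l2"
  shows "c * (l2norm a)\<^sup>2 \<le> Re (l2inner (mat_apply M a) a)"
proof -
  define t where "t N = (\<lambda>k. if k < N then a k else 0)" for N
  have t: "t N \<in> l2" for N
    unfolding t_def by (rule l2_truncation(1)[OF a])
  have "(l2norm (t N))\<^sup>2 \<le> (l2norm a)\<^sup>2" for N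
    unfolding t_def l2_truncation(2)[OF a] l2norm_power2[OF a]
    by (intro sum_le_suminf l2_summable a) auto
  then have t_le: "l2norm (t N) \<le> l2norm a" for N
    by (rule power2_le_imp_le) (rule l2norm_nonneg[OF a])
  have low: "c * (\<Sum>k<N. (cmod (a k))\<^sup>2) - C * l2norm (\<lambda>k. a k - t N k) * (2 * l2norm a)
      \<le> Re (l2inner (mat_apply M a) a)" for N
  proof -
    have "c * (\<Sum>k<N. (cmod (a k))\<^sup>2) = c * (\<Sum>j<N. (Re (a j))\<^sup>2) + c * (\<Sum>j<N. (Im (a j))\<^sup>2)"
      by (simp add: cmod_power2 sum.distrib algebra_simps)
    also have "\<dots> \<le> Re (l2inner (mat_apply M (t N)) (t N))"
      unfolding t_def Re_l2inner_mat_apply_truncation by (intro add_mono finite_sections_lower)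
    also have "\<dots> - Re (l2inner (mat_apply M a) a)
        \<le> cmod (l2inner (mat_apply M a) a - l2inner (mat_apply M (t N)) (t N))"
      by (metis abs_Re_le_cmod abs_le_iff minus_complex.sel(1) minus_diff_eq)
    also have "\<dots> \<le> C * l2norm (\<lambda>k. a k - t N k) * (l2norm a + l2norm (t N))"
      by (rule l2inner_mat_apply_diff_le[OF a t])
    also have "\<dots> \<le> C * l2norm (\<lambda>k. a k - t N k) * (2 * l2norm a)"
      using t_le[of N] C_nonneg l2norm_nonneg[OF l2_diff(1)[OF a t]]
      by (intro mult_left_mono) auto
    finally show ?thesis by simp
  qed
  have "(\<lambda>N. c * (\<Sum>k<N. (cmod (a k))\<^sup>2) - C * l2norm (\<lambda>k. a k - t N k) * (2 * l2norm a))
      \<longlonglongrightarrow> c * (\<Sum>k. (cmod (a k))\<^sup>2) - C * 0 * (2 * l2norm a)"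
    unfolding t_def
    by (intro tendsto_diff tendsto_mult tendsto_const summable_LIMSEQ l2_summable a l2_truncation(3))
  then have "c * (\<Sum>k. (cmod (a k))\<^sup>2) - C * 0 * (2 * l2norm a) \<le> Re (l2inner (mat_apply M a) a)"
    by (rule LIMSEQ_le_const2) (use low in auto)
  then show ?thesis
    by (simp add: l2norm_power2[OF a])
qed

lemma norm_mat_apply_ge:
  assumes a: "a \<in> l2"
  shows "c * l2norm a \<le> l2norm (mat_apply M a)"
proof (cases "l2norm a = 0")
  case True
  then show ?thesis using l2norm_nonneg[OF mat_apply_l2[OF a]] by simp
next
  case False
  have "c * l2norm a * l2norm a \<le> Re (l2inner (mat_apply M a) a)"
    using coercive[OF a] by (simp add: power2_eq_square mult.assoc)
  also have "\<dots> \<le> l2norm (mat_apply M a) * l2norm a"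
    using complex_Re_le_cmod l2inner_Cauchy_Schwarz[OF mat_apply_l2[OF a] a] by (rule order_trans)
  finally show ?thesis
    using False l2norm_nonneg[OF a] by simp
qed

lemma c_le_C: "c \<le> C"
proof -
  define e :: "nat \<Rightarrow> complex" where "e k = (if k = 0 then 1 else 0)" for k
  have "(\<Sum>k. (cmod (e k))\<^sup>2) = 1"
    by (subst suminf_finite[of "{0}"]) (auto simp: e_def)
  moreover have "summable (\<lambda>k. (cmod (e k))\<^sup>2)"
    by (rule summable_finite[of "{0}"]) (auto simp: e_def)
  then have e: "e \<in> l2"
    by (simp add: l2_def)
  ultimately have "l2norm e = 1"
    by (simp add: l2norm_def)
  then show ?thesis
    using order_trans[OF norm_mat_apply_ge[OF e] l2norm_mat_apply_le[OF e]] by simp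
qed

lemma C_pos: "C > 0"
  using c_le_C c_pos by linarith

lemma inj_on_mat_apply: "inj_on (mat_apply M) l2"
proof (rule inj_onI)
  fix a b assume a: "a \<in> l2" and b: "b \<in> l2" and eq: "mat_apply M a = mat_apply M b"
  have "c * l2norm (\<lambda>k. a k - b k) \<le> l2norm (mat_apply M (\<lambda>k. a k - b k))"
    by (rule norm_mat_apply_ge[OF l2_diff(1)[OF a b]])
  also have "\<dots> = 0"
    by (simp add: mat_apply_diff[OF a b] eq)
  finally have "l2norm (\<lambda>k. a k - b k) = 0"
    using c_pos l2norm_nonneg[OF l2_diff(1)[OF a b]] by (simp add: mult_le_0_iff)
  then show "a = b"
    using l2norm_eq_0_iff[OF l2_diff(1)[OF a b]] by (simp add: fun_eq_iff)
qed

text \<open>Expand the square: coercivity controls the cross term, boundedness the quadratic one.\<close>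
lemma l2norm_Richardson_step_le:
  assumes v: "v \<in> l2"
  shows "l2norm (\<lambda>k. v k - complex_of_real (c / C\<^sup>2) * mat_apply M v k)
    \<le> sqrt (1 - c\<^sup>2 / C\<^sup>2) * l2norm v"
proof -
  define \<epsilon> where "\<epsilon> = c / C\<^sup>2"
  have \<epsilon>: "\<epsilon> \<ge> 0" using c_pos by (simp add: \<epsilon>_def)
  have ratio: "c\<^sup>2 / C\<^sup>2 \<le> 1"
    using c_le_C c_pos by (simp add: power_mono)
  have Mv: "mat_apply M v \<in> l2" by (rule mat_apply_l2[OF v])
  have "(l2norm (\<lambda>k. v k - complex_of_real \<epsilon> * mat_apply M v k))\<^sup>2
      = (l2norm v)\<^sup>2 - 2 * (\<epsilon> * Re (l2inner (mat_apply M v) v)) + (\<epsilon> * l2norm (mat_apply M v))\<^sup>2"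
    using \<epsilon> by (simp add: l2norm_diff_power2 v l2_scale Mv l2inner_scale_left)
  also have "\<dots> \<le> (l2norm v)\<^sup>2 - 2 * (\<epsilon> * (c * (l2norm v)\<^sup>2)) + (\<epsilon> * (C * l2norm v))\<^sup>2"
    using mult_left_mono[OF coercive[OF v] \<epsilon>]
      mult_left_mono[OF l2norm_mat_apply_le[OF v] \<epsilon>] l2norm_nonneg[OF Mv] l2norm_nonneg[OF v] \<epsilon>
    by (intro add_mono diff_mono power_mono) auto
  also have "\<dots> = (sqrt (1 - c\<^sup>2 / C\<^sup>2) * l2norm v)\<^sup>2"
    using C_pos ratio by (simp add: \<epsilon>_def power_mult_distrib field_simps power2_eq_square)
  finally show ?thesis
    unfolding \<epsilon>_def by (rule power2_le_imp_le) (simp add: l2norm_nonneg v ratio)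
qed

lemma surj_mat_apply:
  assumes b: "b \<in> l2"
  obtains a where "a \<in> l2" and "mat_apply M a = b"
proof -
  define \<epsilon> where "\<epsilon> = c / C\<^sup>2"
  define q where "q = sqrt (1 - c\<^sup>2 / C\<^sup>2)"
  have \<epsilon>: "\<epsilon> > 0" using c_pos C_pos by (simp add: \<epsilon>_def)
  have q: "0 \<le> q" "q < 1"
    using c_pos C_pos c_le_C by (auto simp: q_def power_mono)
  define A where "A n = ((\<lambda>v k. v k + complex_of_real \<epsilon> * (b k - mat_apply M v k)) ^^ n) (\<lambda>k. 0)" for n
  have A_Suc: "A (Suc n) = (\<lambda>k. A n k + complex_of_real \<epsilon> * (b k - mat_apply M (A n) k))" for n
    by (simp add: A_def)
  have A: "A n \<in> l2" for n
    by (induction n) (auto simp: A_def[of 0] A_Suc intro!: l2_add l2_scale l2_diff b mat_apply_l2)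
  define r where "r n = (\<lambda>k. b k - mat_apply M (A n) k)" for n
  have r: "r n \<in> l2" for n
    unfolding r_def by (rule l2_diff(1)[OF b mat_apply_l2[OF A]])
  have r_Suc: "r (Suc n) = (\<lambda>k. r n k - complex_of_real \<epsilon> * mat_apply M (r n) k)" for n
  proof -
    have "A (Suc n) = (\<lambda>k. A n k + complex_of_real \<epsilon> * r n k)"
      by (simp add: A_Suc r_def)
    then have "mat_apply M (A (Suc n)) = (\<lambda>j. mat_apply M (A n) j + complex_of_real \<epsilon> * mat_apply M (r n) j)"
      by (simp add: mat_apply_add_scale[OF A r])
    then show ?thesis
      unfolding r_def[of "Suc n"] by (simp add: r_def algebra_simps)
  qed
  have r_le: "l2norm (r n) \<le> q ^ n * l2norm b" for n
  proof (induction n)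
    case (Suc n)
    have "l2norm (r (Suc n)) \<le> q * l2norm (r n)"
      unfolding r_Suc q_def \<epsilon>_def by (rule l2norm_Richardson_step_le[OF r])
    also have "\<dots> \<le> q ^ Suc n * l2norm b"
      using mult_left_mono[OF Suc.IH q(1)] by simp
    finally show ?case .
  qed (simp add: r_def A_def)
  have step: "l2norm (\<lambda>k. A (Suc n) k - A n k) \<le> (\<epsilon> * l2norm b) * q ^ n" for n
    using r_le[of n] \<epsilon> l2_scale(2)[OF r, of "complex_of_real \<epsilon>" n]
    by (simp add: A_Suc r_def mult_left_mono mult_ac)
  obtain a where a: "a \<in> l2" and close: "\<And>n. l2norm (\<lambda>k. a k - A n k) \<le> \<epsilon> * l2norm b * q ^ n / (1 - q)"
    using l2_limit_of_geometric_steps[OF A q step] by blast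
  have bound: "l2norm (\<lambda>k. b k - mat_apply M a k) \<le> (l2norm b + C * (\<epsilon> * l2norm b) / (1 - q)) * q ^ n" for n
  proof -
    have split: "(\<lambda>k. b k - mat_apply M a k) = (\<lambda>k. r n k - mat_apply M (\<lambda>k. a k - A n k) k)"
      by (simp add: r_def mat_apply_diff[OF a A] fun_eq_iff)
    have "l2norm (\<lambda>k. b k - mat_apply M a k) \<le> l2norm (r n) + l2norm (mat_apply M (\<lambda>k. a k - A n k))"
      unfolding split by (rule l2_diff(2)[OF r mat_apply_l2[OF l2_diff(1)[OF a A]]])
    also have "\<dots> \<le> q ^ n * l2norm b + C * (\<epsilon> * l2norm b * q ^ n / (1 - q))"
      by (intro add_mono r_le order_trans[OF l2norm_mat_apply_le[OF l2_diff(1)[OF a A]]]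
          mult_left_mono close C_nonneg)
    finally show ?thesis
      by (simp add: field_simps)
  qed
  have "(\<lambda>n. (l2norm b + C * (\<epsilon> * l2norm b) / (1 - q)) * q ^ n) \<longlonglongrightarrow> 0"
    using q by (intro tendsto_mult_right_zero LIMSEQ_power_zero) auto
  then have "l2norm (\<lambda>k. b k - mat_apply M a k) \<le> 0"
    by (rule LIMSEQ_le_const) (use bound in blast)
  then have "(\<lambda>k. b k - mat_apply M a k) = (\<lambda>k. 0)"
    using l2norm_eq_0_iff[OF l2_diff(1)[OF b mat_apply_l2[OF a]]] l2norm_nonneg[OF l2_diff(1)[OF b mat_apply_l2[OF a]]]
    by simp
  then show ?thesis
    using that[OF a] by (simp add: fun_eq_iff)
qed

lemma invertible_mat_op_M: "invertible_mat_op M"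
  unfolding invertible_mat_op_def bij_betw_def
proof (intro conjI)
  show "\<exists>C. bounded_mat_op M C"
    using bounded_mat_op_M by blast
  show "inj_on (mat_apply M) l2"
    by (rule inj_on_mat_apply)
  show "mat_apply M ` l2 = l2"
  proof
    show "mat_apply M ` l2 \<subseteq> l2"
      using mat_apply_l2 by blast
    show "l2 \<subseteq> mat_apply M ` l2"
    proof
      fix b assume "b \<in> l2"
      then obtain a where "a \<in> l2" "mat_apply M a = b"
        by (rule surj_mat_apply)
      then show "b \<in> mat_apply M ` l2"
        by blast
    qed
  qed
  show "\<exists>c>0. \<forall>a\<in>l2. c * l2norm a \<le> l2norm (mat_apply M a)"
    using c_pos norm_mat_apply_ge by blast
qed

end

section \<open>Counting separated points\<close>

definition coord_proj :: "'m set \<Rightarrow> real^'m \<Rightarrow> real^'m" where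
  "coord_proj D z = (\<chi> i. if i \<in> D then z$i else 0)"

text \<open>Balls of the d-dimensional coordinate subspace are null sets of the ambient space, so the
  packing argument uses cylinders over them with unit height in the remaining coordinates.\<close>
definition cylinder :: "'m set \<Rightarrow> real^'m \<Rightarrow> real \<Rightarrow> (real^'m) set" where
  "cylinder D c \<rho> = {z. norm (coord_proj D z - c) \<le> \<rho> \<and> (\<forall>i. i \<notin> D \<longrightarrow> 0 \<le> z$i \<and> z$i \<le> 1)}"

lemma linear_coord_proj: "linear (coord_proj D)"
  unfolding coord_proj_def by (auto simp: linear_iff vec_eq_iff)

lemma continuous_on_coord_proj: "continuous_on S (coord_proj D)"
  by (simp add: linear_continuous_on linear_linear linear_coord_proj)

lemma compact_cylinder: "compact (cylinder D c \<rho>)"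
proof -
  have closed: "closed (cylinder D c \<rho>)"
    unfolding cylinder_def
    by (intro closed_Collect_conj closed_Collect_all closed_Collect_imp closed_Collect_le
        continuous_intros continuous_on_compose2[OF continuous_on_coord_proj, of UNIV] ) auto
  have "bounded (cylinder D c \<rho>)"
  proof -
    have "norm z \<le> real CARD('a) * (\<bar>\<rho>\<bar> + norm c + 1)" if "z \<in> cylinder D c \<rho>" for z :: "real^'a"
    proof -
      have "norm z \<le> (\<Sum>i\<in>UNIV. \<bar>z$i\<bar>)" by (rule norm_le_l1_cart)
      also have "\<dots> \<le> (\<Sum>i\<in>(UNIV::'a set). \<bar>\<rho>\<bar> + norm c + 1)"
      proof (rule sum_mono)
        fix i
        show "\<bar>z$i\<bar> \<le> \<bar>\<rho>\<bar> + norm c + 1"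
        proof (cases "i \<in> D")
          case True
          have "\<bar>z$i\<bar> = \<bar>(coord_proj D z - c + c)$i\<bar>" using True by (simp add: coord_proj_def)
          also have "\<dots> \<le> norm (coord_proj D z - c + c)" by (rule component_le_norm_cart)
          also have "\<dots> \<le> norm (coord_proj D z - c) + norm c" by (rule norm_triangle_ineq)
          finally show ?thesis using that by (auto simp: cylinder_def)
        next
          case False
          have "0 \<le> norm c" "0 \<le> \<bar>\<rho>\<bar>" by auto
          moreover have "0 \<le> z$i \<and> z$i \<le> 1" using that False by (auto simp: cylinder_def)
          ultimately show ?thesis by linarith
        qed
      qed
      finally show ?thesis by simp
    qed
    then show ?thesis unfolding bounded_iff by blast
  qed
  with closed show ?thesis using bounded_closed_imp_seq_compact compact_eq_seq_compact_metric by blast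
qed

lemma cylinder_translate:
  assumes "\<And>i. i \<notin> D \<Longrightarrow> c$i = 0"
  shows "cylinder D c \<rho> = (+) c ` cylinder D 0 \<rho>"
proof -
  have proj: "coord_proj D (c + z) = c + coord_proj D z" for z
    using assms by (auto simp: coord_proj_def vec_eq_iff)
  show ?thesis
  proof (rule set_eqI, rule iffI)
    fix z assume "z \<in> cylinder D c \<rho>"
    then have "z - c \<in> cylinder D 0 \<rho>" using proj[of "z - c"] assms by (auto simp: cylinder_def)
    then show "z \<in> (+) c ` cylinder D 0 \<rho>" by (intro image_eqI[of _ _ "z - c"]) auto
  next
    fix z assume "z \<in> (+) c ` cylinder D 0 \<rho>"
    then obtain w where "w \<in> cylinder D 0 \<rho>" "z = c + w" by auto
    then show "z \<in> cylinder D c \<rho>" using proj[of w] assms by (auto simp: cylinder_def)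
  qed
qed

definition coord_scale :: "'m set \<Rightarrow> real \<Rightarrow> real^'m \<Rightarrow> real^'m" where
  "coord_scale D \<rho> z = (\<chi> i. if i \<in> D then \<rho> * z$i else z$i)"

lemma linear_coord_scale: "linear (coord_scale D \<rho>)"
  unfolding coord_scale_def by (auto simp: linear_iff vec_eq_iff algebra_simps)

lemma det_coord_scale: "det (matrix (coord_scale D \<rho>)) = \<rho> ^ card D"
proof -
  have "det (matrix (coord_scale D \<rho>)) = (\<Prod>i\<in>UNIV. matrix (coord_scale D \<rho>) $ i $ i)"
    by (rule det_diagonal) (auto simp: matrix_def coord_scale_def axis_def)
  also have "\<dots> = (\<Prod>i\<in>UNIV. if i \<in> D then \<rho> else 1)"
    by (auto simp: matrix_def coord_scale_def axis_def intro!: prod.cong)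
  also have "\<dots> = \<rho> ^ card D"
    by (simp add: prod.If_cases Int_absorb1)
  finally show ?thesis .
qed

lemma cylinder_scale:
  assumes "\<rho> > 0"
  shows "cylinder D 0 \<rho> = coord_scale D \<rho> ` cylinder D 0 1"
proof -
  have proj: "coord_proj D (coord_scale D s z) = s *\<^sub>R coord_proj D z" for s z
    by (auto simp: coord_proj_def coord_scale_def vec_eq_iff)
  have inverse: "coord_scale D \<rho> (coord_scale D (1/\<rho>) z) = z" for z
    using assms by (auto simp: coord_scale_def vec_eq_iff)
  show ?thesis
  proof (rule set_eqI, rule iffI)
    fix z assume z: "z \<in> cylinder D 0 \<rho>"
    have "norm (coord_proj D (coord_scale D (1/\<rho>) z)) \<le> 1"
      using z assms by (simp add: cylinder_def proj divide_simps)
    then have "coord_scale D (1/\<rho>) z \<in> cylinder D 0 1"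
      using z assms by (auto simp: cylinder_def coord_scale_def)
    then show "z \<in> coord_scale D \<rho> ` cylinder D 0 1" using inverse[of z] by (metis image_eqI)
  next
    fix z assume "z \<in> coord_scale D \<rho> ` cylinder D 0 1"
    then obtain w where w: "w \<in> cylinder D 0 1" "z = coord_scale D \<rho> w" by auto
    have "norm (coord_proj D z) \<le> \<rho>" using w assms by (simp add: proj cylinder_def mult_left_le)
    then show "z \<in> cylinder D 0 \<rho>" using assms w
      by (auto simp: cylinder_def coord_scale_def)
  qed
qed

lemma measure_cylinder:
  fixes D :: "'m::{finite,wellorder} set"
  assumes \<rho>: "\<rho> > 0" and c: "\<And>i. i \<notin> D \<Longrightarrow> c $ i = 0"
  shows "measure lebesgue (cylinder D c \<rho>) = \<rho> ^ card D * measure lebesgue (cylinder D 0 1)"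
proof -
  have "cylinder D c \<rho> = (+) c ` cylinder D 0 \<rho>"
    by (rule cylinder_translate[OF c])
  then have "measure lebesgue (cylinder D c \<rho>) = measure lebesgue (cylinder D 0 \<rho>)"
    by (simp only: measure_translation)
  also have "\<dots> = measure lebesgue (coord_scale D \<rho> ` cylinder D 0 1)"
    by (simp only: cylinder_scale[OF \<rho>])
  also have "\<dots> = \<bar>det (matrix (coord_scale D \<rho>))\<bar> * measure lebesgue (cylinder D 0 1)"
    by (rule measure_linear_image[OF linear_coord_scale lmeasurable_compact[OF compact_cylinder]])
  finally show ?thesis
    using \<rho> by (simp add: det_coord_scale)
qed

lemma measure_cylinder_pos:
  fixes D :: "'m::{finite,wellorder} set"
  shows "measure lebesgue (cylinder D 0 1) > 0"
proof -
  define \<eta> :: real where "\<eta> = 1 / real CARD('m)"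
  define a where "a = (\<chi> i. if i \<in> D then - \<eta> else 0)"
  define b where "b = (\<chi> i. if i \<in> D then \<eta> else 1)"
  have \<eta>: "\<eta> > 0" by (simp add: \<eta>_def)
  have "cbox a b \<subseteq> cylinder D 0 1"
  proof
    fix z assume "z \<in> cbox a b"
    then have z: "a $ i \<le> z $ i \<and> z $ i \<le> b $ i" for i
      by (simp add: mem_box_cart)
    have "norm (coord_proj D z) \<le> (\<Sum>i\<in>UNIV. \<bar>coord_proj D z $ i\<bar>)"
      by (rule norm_le_l1_cart)
    also have "\<dots> \<le> (\<Sum>i\<in>(UNIV :: 'm set). \<eta>)"
    proof (rule sum_mono)
      show "\<bar>coord_proj D z $ i\<bar> \<le> \<eta>" for i
        using z[of i] \<eta> by (auto simp: coord_proj_def a_def b_def abs_le_iff split: if_splits)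
    qed
    also have "\<dots> = 1"
      by (simp add: \<eta>_def)
    moreover have "0 \<le> z $ i \<and> z $ i \<le> 1" if "i \<notin> D" for i
      using z[of i] that by (simp add: a_def b_def)
    ultimately show "z \<in> cylinder D 0 1"
      by (auto simp: cylinder_def)
  qed
  then have "measure lebesgue (cbox a b) \<le> measure lebesgue (cylinder D 0 1)"
    by (rule measure_mono_fmeasurable) (auto intro: lmeasurable_compact compact_cylinder)
  moreover have "measure lebesgue (cbox a b) > 0"
    using \<eta> by (auto simp: content_pos_lt_eq Basis_vec_def inner_axis a_def b_def)
  ultimately show ?thesis
    by linarith
qed

lemma card_packing_le:
  fixes y :: "nat \<Rightarrow> real ^ 'm::{finite,wellorder}" and D :: "'m set"
  assumes y: "\<And>k i. i \<notin> D \<Longrightarrow> y k $ i = 0" and c: "\<And>i. i \<notin> D \<Longrightarrow> c $ i = 0"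
    and \<delta>: "\<delta> > 0" and r: "r \<ge> 0" and F: "finite F"
    and separated: "\<And>k l. k \<in> F \<Longrightarrow> l \<in> F \<Longrightarrow> k \<noteq> l \<Longrightarrow> \<delta> \<le> dist (y k) (y l)"
    and close: "\<And>k. k \<in> F \<Longrightarrow> dist (y k) c \<le> r"
  shows "real (card F) * (\<delta> / 3) ^ card D \<le> (r + \<delta> / 3) ^ card D"
proof -
  define m where "m = measure lebesgue (cylinder D 0 1)"
  have "pairwise (\<lambda>k l. disjnt (cylinder D (y k) (\<delta> / 3)) (cylinder D (y l) (\<delta> / 3))) F"
  proof (unfold pairwise_def disjnt_def, intro ballI impI equals0I)
    fix k l z assume kl: "k \<in> F" "l \<in> F" "k \<noteq> l"
      and z: "z \<in> cylinder D (y k) (\<delta> / 3) \<inter> cylinder D (y l) (\<delta> / 3)"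
    have "dist (y k) (y l) = norm ((coord_proj D z - y l) - (coord_proj D z - y k))"
      by (simp add: dist_norm)
    also have "\<dots> \<le> norm (coord_proj D z - y l) + norm (coord_proj D z - y k)"
      by (rule norm_triangle_ineq4)
    also have "\<dots> \<le> 2 * \<delta> / 3"
      using z by (auto simp: cylinder_def)
    finally show False
      using separated[OF kl] \<delta> by linarith
  qed
  then have "(\<Sum>k\<in>F. measure lebesgue (cylinder D (y k) (\<delta> / 3)))
      = measure lebesgue (\<Union>k\<in>F. cylinder D (y k) (\<delta> / 3))"
    by (intro measure_UNION'[symmetric] F) (auto intro: lmeasurable_compact compact_cylinder)
  also have "\<dots> \<le> measure lebesgue (cylinder D c (r + \<delta> / 3))"
  proof (rule measure_mono_fmeasurable)
    show "(\<Union>k\<in>F. cylinder D (y k) (\<delta> / 3)) \<subseteq> cylinder D c (r + \<delta> / 3)"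
    proof (intro subsetI, elim UN_E)
      fix k z assume k: "k \<in> F" and z: "z \<in> cylinder D (y k) (\<delta> / 3)"
      have "norm (coord_proj D z - c) \<le> norm (coord_proj D z - y k) + norm (y k - c)"
        using norm_triangle_ineq[of "coord_proj D z - y k" "y k - c"] by simp
      then show "z \<in> cylinder D c (r + \<delta> / 3)"
        using z close[OF k] by (auto simp: cylinder_def dist_norm)
    qed
  qed (auto intro!: fmeasurableD lmeasurable_compact compact_cylinder compact_UN F)
  finally have "real (card F) * ((\<delta> / 3) ^ card D * m) \<le> (r + \<delta> / 3) ^ card D * m"
    using measure_cylinder[OF _ y, of "\<delta> / 3"] measure_cylinder[OF _ c, of "r + \<delta> / 3"] \<delta> r
    by (simp add: m_def)
  then show ?thesis
    using measure_cylinder_pos[of D] by (simp add: m_def mult.assoc[symmetric])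
qed

section \<open>Gaussian and inverse multiquadric sums\<close>

lemma has_integral_Gamma_scaled:
  fixes a l :: real
  assumes a: "a > 0" and l: "l > 0"
  shows "((\<lambda>t. t powr (a - 1) * exp (- (l * t))) has_integral Gamma a / l powr a) {0..}"
proof -
  let ?f = "\<lambda>t::real. t powr (a - 1) / exp t"
  have fi: "(?f has_integral Gamma a) {0..}" by (rule Gamma_integral_real[OF a])
  have fa: "?f absolutely_integrable_on {0..}"
    by (rule nonnegative_absolutely_integrable_1) (use fi in \<open>auto simp: has_integral_integrable\<close>)
  have img: "(\<lambda>s. l * s) ` {0..} = {0..}"
  proof (rule set_eqI, rule iffI)
    fix t :: real assume "t \<in> {0..}" then show "t \<in> (\<lambda>s. l * s) ` {0..}" using l
      by (intro image_eqI[of _ _ "t / l"]) auto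
  qed (use l in auto)
  have der: "\<And>x. x \<in> {0..} \<Longrightarrow> ((\<lambda>s. l * s) has_field_derivative l) (at x within {0..})"
    by (auto intro!: derivative_eq_intros)
  have inj: "inj_on (\<lambda>s. l * s) {0..}" using l by (auto simp: inj_on_def)
  have "(\<lambda>x. \<bar>l\<bar> * ?f (l * x)) absolutely_integrable_on {0..} \<and>
        integral {0..} (\<lambda>x. \<bar>l\<bar> * ?f (l * x)) = Gamma a"
    using has_absolute_integral_change_of_variables_1'[OF _ der inj, of ?f "Gamma a"] fa fi img
    by (auto simp: integral_unique)
  then have "((\<lambda>x. \<bar>l\<bar> * ?f (l * x)) has_integral Gamma a) {0..}"
    by (metis absolutely_integrable_on_def has_integral_integral)
  then have "((\<lambda>x. (1 / l powr a) * (\<bar>l\<bar> * ?f (l * x))) has_integral (1 / l powr a) * Gamma a) {0..}"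
    by (rule has_integral_mult_right)
  moreover have "(1 / l powr a) * (\<bar>l\<bar> * ?f (l * x)) = x powr (a - 1) * exp (- (l * x))" if "x \<in> {0..}" for x
  proof -
    have "(l * x) powr (a - 1) = l powr (a - 1) * x powr (a - 1)"
      using that l by (simp add: powr_mult)
    moreover have "l powr (a - 1) = l powr a / l" using l by (simp add: powr_diff)
    ultimately show ?thesis using l by (simp add: exp_minus field_simps)
  qed
  ultimately show ?thesis
    by (subst has_integral_cong[symmetric]) (auto simp: field_simps)
qed

lemma has_integral_exp_tail:
  fixes t c :: real
  assumes t: "t > 0" and c: "c \<ge> 0"
  shows "((\<lambda>u. if u \<in> {c..} then t * exp (- (t * u)) else 0) has_integral exp (- (t * c))) {0..}"
proof -
  have "((\<lambda>u. exp (-t*u)) has_integral exp (-t*c)/t) {c..}"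
    by (rule has_integral_exp_minus_to_infinity) (use t in auto)
  then have "((\<lambda>u. t * exp (-t*u)) has_integral t * (exp (-t*c)/t)) {c..}"
    by (rule has_integral_mult_right)
  then have "((\<lambda>u. t * exp (- (t*u))) has_integral exp (- (t*c))) {c..}" using t by simp
  then show ?thesis using c by (subst has_integral_restrict) auto
qed

lemma sum_exp_le_of_counting_bound:
  fixes s :: "nat \<Rightarrow> real" and G :: "nat set"
  assumes G: "finite G"
    and cnt: "\<And>u. u \<ge> 0 \<Longrightarrow> real (card {k\<in>G. (s k)^2 \<le> u}) \<le> c0 * u powr e"
    and e: "e > 0" and t: "t > 0"
  shows "(\<Sum>k\<in>G. exp (- (t * (s k)^2))) \<le> c0 * Gamma (e+1) * t powr (-e)"
proof -
  have I1: "((\<lambda>u. \<Sum>k\<in>G. if u \<in> {(s k)^2..} then t * exp (- (t * u)) else 0)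
     has_integral (\<Sum>k\<in>G. exp (- (t * (s k)^2)))) {0..}"
    by (rule has_integral_sum[OF G]) (use t has_integral_exp_tail[OF t] in \<open>auto\<close>)
  have I2: "((\<lambda>u. (c0 * t) * (u powr (e + 1 - 1) * exp (- (t * u)))) has_integral
       (c0 * t) * (Gamma (e+1) / t powr (e+1))) {0..}"
    by (rule has_integral_mult_right, rule has_integral_Gamma_scaled) (use e t in auto)
  have le: "(\<Sum>k\<in>G. if u \<in> {(s k)^2..} then t * exp (- (t * u)) else 0)
      \<le> (c0 * t) * (u powr (e + 1 - 1) * exp (- (t * u)))" if u: "u \<in> {0..}" for u
  proof -
    have "(\<Sum>k\<in>G. if u \<in> {(s k)^2..} then t * exp (- (t * u)) else 0)
        = (\<Sum>k\<in>{k\<in>G. (s k)^2 \<le> u}. t * exp (- (t * u)))"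
      using G by (simp add: sum.If_cases Int_def conj_commute)
    also have "\<dots> = real (card {k\<in>G. (s k)^2 \<le> u}) * (t * exp (- (t * u)))" by simp
    also have "\<dots> \<le> (c0 * u powr e) * (t * exp (- (t * u)))"
      by (rule mult_right_mono[OF cnt]) (use u t in auto)
    finally show ?thesis by (simp add: mult_ac)
  qed
  have "(\<Sum>k\<in>G. exp (- (t * (s k)^2))) \<le> (c0 * t) * (Gamma (e+1) / t powr (e+1))"
    by (rule has_integral_le[OF I1 I2 le])
  also have "\<dots> = c0 * Gamma (e+1) * t powr (-e)"
    using t by (simp add: powr_add powr_minus field_simps)
  finally show ?thesis .
qed

lemma has_integral_inverse_multiquadric:
  fixes \<beta> s :: real
  assumes "\<beta> > 0"
  shows "((\<lambda>t. t powr (\<beta> - 1) * exp (- t) * exp (- (t * s^2))) has_integral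
          Gamma \<beta> * (1 + s^2) powr (-\<beta>)) {0..}"
proof -
  have "((\<lambda>t. t powr (\<beta> - 1) * exp (- ((1 + s^2) * t))) has_integral Gamma \<beta> / (1 + s^2) powr \<beta>) {0..}"
    by (rule has_integral_Gamma_scaled) (use assms in \<open>auto intro: add_pos_nonneg\<close>)
  moreover have "exp (- ((1 + s^2) * t)) = exp (- t) * exp (- (t * s^2))" for t
    by (simp add: algebra_simps exp_add[symmetric])
  ultimately show ?thesis by (simp add: powr_minus divide_inverse mult.assoc)
qed

lemma sum_inverse_multiquadric_le_of_counting_bound:
  fixes s :: "nat \<Rightarrow> real" and G :: "nat set"
  assumes G: "finite G"
    and cnt: "\<And>u. u \<ge> 0 \<Longrightarrow> real (card {k\<in>G. (s k)^2 \<le> u}) \<le> c0 * u powr e"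
    and e: "e > 0" and be: "\<beta> > e"
  shows "(\<Sum>k\<in>G. (1 + (s k)^2) powr (-\<beta>)) \<le> c0 * Gamma (e+1) * Gamma (\<beta> - e) / Gamma \<beta>"
proof -
  have b: "\<beta> > 0" using e be by linarith
  have Gb: "Gamma \<beta> > 0" using b by (rule Gamma_real_pos)
  have I1: "((\<lambda>t. \<Sum>k\<in>G. t powr (\<beta> - 1) * exp (- t) * exp (- (t * (s k)^2))) has_integral
      (\<Sum>k\<in>G. Gamma \<beta> * (1 + (s k)^2) powr (-\<beta>))) {0..}"
    by (rule has_integral_sum[OF G]) (use b in \<open>auto intro: has_integral_inverse_multiquadric\<close>)
  have I2: "((\<lambda>t. (c0 * Gamma (e+1)) * (t powr (\<beta> - e - 1) * exp (- (1 * t)))) has_integral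
      (c0 * Gamma (e+1)) * (Gamma (\<beta> - e) / 1 powr (\<beta> - e))) {0..}"
    by (rule has_integral_mult_right, rule has_integral_Gamma_scaled) (use be in auto)
  have le: "(\<Sum>k\<in>G. t powr (\<beta> - 1) * exp (- t) * exp (- (t * (s k)^2)))
     \<le> (c0 * Gamma (e+1)) * (t powr (\<beta> - e - 1) * exp (- (1 * t)))" if t: "t \<in> {0..}" for t
  proof (cases "t = 0")
    case True then show ?thesis by simp
  next
    case False
    then have t: "t > 0" using t by auto
    have "(\<Sum>k\<in>G. t powr (\<beta> - 1) * exp (- t) * exp (- (t * (s k)^2)))
        = t powr (\<beta> - 1) * exp (- t) * (\<Sum>k\<in>G. exp (- (t * (s k)^2)))"
      by (simp add: sum_distrib_left)
    also have "\<dots> \<le> t powr (\<beta> - 1) * exp (- t) * (c0 * Gamma (e+1) * t powr (-e))"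
      by (rule mult_left_mono[OF sum_exp_le_of_counting_bound[OF G cnt e t]]) auto
    also have "\<dots> = (c0 * Gamma (e+1)) * (t powr (\<beta> - e - 1) * exp (- (1 * t)))"
      using t by (simp add: powr_add[symmetric] algebra_simps)
    finally show ?thesis .
  qed
  have "(\<Sum>k\<in>G. Gamma \<beta> * (1 + (s k)^2) powr (-\<beta>)) \<le> (c0 * Gamma (e+1)) * (Gamma (\<beta> - e) / 1 powr (\<beta> - e))"
    by (rule has_integral_le[OF I1 I2 le])
  then have "Gamma \<beta> * (\<Sum>k\<in>G. (1 + (s k)^2) powr (-\<beta>)) \<le> c0 * Gamma (e+1) * Gamma (\<beta> - e)"
    by (simp add: sum_distrib_left)
  then show ?thesis using Gb by (simp add: field_simps)
qed

section \<open>Positive definiteness\<close>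

lemma quadratic_form_inner_power_nonneg:
  fixes y :: "nat \<Rightarrow> 'a::euclidean_space"
  shows "0 \<le> (\<Sum>j\<in>F. \<Sum>k\<in>F. v j * v k * (y j \<bullet> y k) ^ m)"
proof (induction m arbitrary: v)
  case 0
  have "(\<Sum>j\<in>F. \<Sum>k\<in>F. v j * v k * (y j \<bullet> y k) ^ 0) = (\<Sum>j\<in>F. v j) * (\<Sum>k\<in>F. v k)"
    by (simp add: sum_product)
  then show ?case by simp
next
  case (Suc m)
  have "(\<Sum>j\<in>F. \<Sum>k\<in>F. v j * v k * (y j \<bullet> y k) ^ Suc m)
      = (\<Sum>j\<in>F. \<Sum>k\<in>F. \<Sum>b\<in>Basis. (v j * (y j \<bullet> b)) * (v k * (y k \<bullet> b)) * (y j \<bullet> y k) ^ m)"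
  proof (intro sum.cong refl)
    fix j k
    have "v j * v k * (y j \<bullet> y k) ^ Suc m = v j * v k * (y j \<bullet> y k) * (y j \<bullet> y k) ^ m" by (simp add: mult_ac)
    also have "\<dots> = v j * v k * (\<Sum>b\<in>Basis. (y j \<bullet> b) * (y k \<bullet> b)) * (y j \<bullet> y k) ^ m"
      by (subst euclidean_inner) simp
    also have "\<dots> = (\<Sum>b\<in>Basis. (v j * (y j \<bullet> b)) * (v k * (y k \<bullet> b)) * (y j \<bullet> y k) ^ m)"
      by (simp add: sum_distrib_left sum_distrib_right mult_ac)
    finally show "v j * v k * (y j \<bullet> y k) ^ Suc m = \<dots>" .
  qed
  also have "\<dots> = (\<Sum>j\<in>F. \<Sum>b\<in>Basis. \<Sum>k\<in>F. (v j * (y j \<bullet> b)) * (v k * (y k \<bullet> b)) * (y j \<bullet> y k) ^ m)"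
    by (rule sum.cong[OF refl], rule sum.swap)
  also have "\<dots> = (\<Sum>b\<in>Basis. \<Sum>j\<in>F. \<Sum>k\<in>F. (v j * (y j \<bullet> b)) * (v k * (y k \<bullet> b)) * (y j \<bullet> y k) ^ m)"
    by (rule sum.swap)
  also have "\<dots> \<ge> 0" by (intro sum_nonneg Suc.IH)
  finally show ?case by simp
qed

lemma quadratic_form_gaussian_nonneg:
  fixes y :: "nat \<Rightarrow> 'a::euclidean_space" and u :: "nat \<Rightarrow> real"
  assumes F: "finite F" and t: "t \<ge> 0"
  shows "0 \<le> (\<Sum>j\<in>F. \<Sum>k\<in>F. u j * u k * exp (- (t * (norm (y j - y k))\<^sup>2)))"
proof -
  define v where "v j = u j * exp (- (t * (norm (y j))\<^sup>2))" for j
  have factor: "u j * u k * exp (- (t * (norm (y j - y k))\<^sup>2)) = v j * v k * exp (2 * t * (y j \<bullet> y k))"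
    for j k
  proof -
    have sq: "(norm (y j - y k))\<^sup>2 = (norm (y j))\<^sup>2 + (norm (y k))\<^sup>2 - 2 * (y j \<bullet> y k)"
      by (simp add: power2_norm_eq_inner inner_diff_left inner_diff_right inner_commute)
    have "- (t * (norm (y j - y k))\<^sup>2)
        = - (t * (norm (y j))\<^sup>2) + - (t * (norm (y k))\<^sup>2) + 2 * t * (y j \<bullet> y k)"
      unfolding sq by (simp add: algebra_simps)
    then have "exp (- (t * (norm (y j - y k))\<^sup>2))
        = exp (- (t * (norm (y j))\<^sup>2)) * exp (- (t * (norm (y k))\<^sup>2)) * exp (2 * t * (y j \<bullet> y k))"
      by (simp only: exp_add)
    then show ?thesis
      by (simp add: v_def mult_ac)
  qed
  have series: "(\<lambda>n. v j * v k * ((2 * t) ^ n / fact n * (y j \<bullet> y k) ^ n))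
      sums (v j * v k * exp (2 * t * (y j \<bullet> y k)))" for j k
    using sums_mult[OF exp_converges[of "2 * t * (y j \<bullet> y k)"], of "v j * v k"]
    by (simp add: power_mult_distrib divide_inverse mult_ac)
  have sums: "(\<lambda>n. \<Sum>j\<in>F. \<Sum>k\<in>F. v j * v k * ((2 * t) ^ n / fact n * (y j \<bullet> y k) ^ n))
      sums (\<Sum>j\<in>F. \<Sum>k\<in>F. v j * v k * exp (2 * t * (y j \<bullet> y k)))"
    by (intro sums_sum series)
  have terms: "0 \<le> (\<Sum>j\<in>F. \<Sum>k\<in>F. v j * v k * ((2 * t) ^ n / fact n * (y j \<bullet> y k) ^ n))" for n
  proof -
    have "0 \<le> (2 * t) ^ n / fact n * (\<Sum>j\<in>F. \<Sum>k\<in>F. v j * v k * (y j \<bullet> y k) ^ n)"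
      using t by (intro mult_nonneg_nonneg divide_nonneg_nonneg quadratic_form_inner_power_nonneg) auto
    then show ?thesis
      by (simp add: sum_distrib_left mult_ac)
  qed
  have "0 \<le> (\<Sum>j\<in>F. \<Sum>k\<in>F. v j * v k * exp (2 * t * (y j \<bullet> y k)))"
    by (rule sums_le[OF terms sums_zero sums])
  also have "\<dots> = (\<Sum>j\<in>F. \<Sum>k\<in>F. u j * u k * exp (- (t * (norm (y j - y k))\<^sup>2)))"
    by (intro sum.cong refl factor[symmetric])
  finally show ?thesis .
qed

lemma quadratic_form_ge_of_row_sums:
  fixes h :: "nat \<Rightarrow> nat \<Rightarrow> real" and u :: "nat \<Rightarrow> real"
  assumes F: "finite F" and h0: "\<And>j k. h j k \<ge> 0" and hs: "\<And>j k. h j k = h k j"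
    and hb: "\<And>j. j \<in> F \<Longrightarrow> (\<Sum>k\<in>F. h j k) \<le> \<epsilon>"
  shows "- (\<epsilon> * (\<Sum>j\<in>F. (u j)\<^sup>2)) \<le> (\<Sum>j\<in>F. \<Sum>k\<in>F. u j * u k * h j k)"
proof -
  have pt: "- (((u j)\<^sup>2 + (u k)\<^sup>2) / 2 * h j k) \<le> u j * u k * h j k" for j k
  proof -
    have "0 \<le> (u j + u k)\<^sup>2" by simp
    then have "0 \<le> (u j)\<^sup>2 + (u k)\<^sup>2 + 2 * (u j * u k)" by (simp add: power2_sum)
    then have X: "- (((u j)\<^sup>2 + (u k)\<^sup>2) / 2) \<le> u j * u k" by (simp add: field_simps)
    show ?thesis using mult_right_mono[OF X h0[of j k]] by simp
  qed
  have sw: "(\<Sum>j\<in>F. \<Sum>k\<in>F. (u k)\<^sup>2 * h j k) = (\<Sum>j\<in>F. \<Sum>k\<in>F. (u j)\<^sup>2 * h j k)"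
    by (subst sum.swap) (simp add: hs)
  have "(\<Sum>j\<in>F. \<Sum>k\<in>F. ((u j)\<^sup>2 + (u k)\<^sup>2) / 2 * h j k)
      = (\<Sum>j\<in>F. \<Sum>k\<in>F. (u j)\<^sup>2 * h j k / 2 + (u k)\<^sup>2 * h j k / 2)"
    by (intro sum.cong refl) (simp add: field_simps)
  also have "\<dots> = (\<Sum>j\<in>F. \<Sum>k\<in>F. (u j)\<^sup>2 * h j k / 2) + (\<Sum>j\<in>F. \<Sum>k\<in>F. (u k)\<^sup>2 * h j k / 2)"
    by (simp only: sum.distrib)
  also have "\<dots> = ((\<Sum>j\<in>F. \<Sum>k\<in>F. (u j)\<^sup>2 * h j k) + (\<Sum>j\<in>F. \<Sum>k\<in>F. (u k)\<^sup>2 * h j k)) / 2"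
    by (simp only: sum_divide_distrib add_divide_distrib)
  also have "\<dots> = (\<Sum>j\<in>F. \<Sum>k\<in>F. (u j)\<^sup>2 * h j k)" by (simp only: sw) simp
  also have "\<dots> = (\<Sum>j\<in>F. (u j)\<^sup>2 * (\<Sum>k\<in>F. h j k))" by (simp only: sum_distrib_left)
  also have "\<dots> \<le> (\<Sum>j\<in>F. (u j)\<^sup>2 * \<epsilon>)" by (intro sum_mono mult_left_mono hb) auto
  also have "\<dots> = \<epsilon> * (\<Sum>j\<in>F. (u j)\<^sup>2)" by (simp add: sum_distrib_left mult_ac)
  finally have "- (\<epsilon> * (\<Sum>j\<in>F. (u j)\<^sup>2)) \<le> - (\<Sum>j\<in>F. \<Sum>k\<in>F. ((u j)\<^sup>2 + (u k)\<^sup>2) / 2 * h j k)" by simp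
  also have "\<dots> = (\<Sum>j\<in>F. \<Sum>k\<in>F. - (((u j)\<^sup>2 + (u k)\<^sup>2) / 2 * h j k))" by (simp add: sum_negf)
  also have "\<dots> \<le> (\<Sum>j\<in>F. \<Sum>k\<in>F. u j * u k * h j k)" by (intro sum_mono pt)
  finally show ?thesis .
qed

lemma quadratic_form_inverse_multiquadric_ge:
  fixes u :: "nat \<Rightarrow> real" and s :: "nat \<Rightarrow> nat \<Rightarrow> real"
  assumes F: "finite F" and \<beta>: "\<beta> > 0" and T: "T > 0" and L: "L \<ge> 0"
    and psd: "\<And>t. t \<ge> 0 \<Longrightarrow> 0 \<le> (\<Sum>j\<in>F. \<Sum>k\<in>F. u j * u k * exp (- (t * (s j k)\<^sup>2)))"
    and lower: "\<And>t. T \<le> t \<Longrightarrow> t \<le> T + 1 \<Longrightarrow> L \<le> (\<Sum>j\<in>F. \<Sum>k\<in>F. u j * u k * exp (- (t * (s j k)\<^sup>2)))"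
  shows "min (T powr (\<beta> - 1)) ((T + 1) powr (\<beta> - 1)) * exp (- (T + 1)) * L / Gamma \<beta>
    \<le> (\<Sum>j\<in>F. \<Sum>k\<in>F. u j * u k * (1 + (s j k)\<^sup>2) powr (- \<beta>))"
proof -
  define \<kappa> where "\<kappa> = min (T powr (\<beta> - 1)) ((T + 1) powr (\<beta> - 1)) * exp (- (T + 1))"
  define Q where "Q t = (\<Sum>j\<in>F. \<Sum>k\<in>F. u j * u k * exp (- (t * (s j k)\<^sup>2)))" for t
  have \<kappa>: "\<kappa> \<ge> 0" unfolding \<kappa>_def using T by simp
  have I1: "((\<lambda>t. \<Sum>j\<in>F. \<Sum>k\<in>F. u j * u k * (t powr (\<beta> - 1) * exp (- t) * exp (- (t * (s j k)\<^sup>2))))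
      has_integral (\<Sum>j\<in>F. \<Sum>k\<in>F. u j * u k * (Gamma \<beta> * (1 + (s j k)\<^sup>2) powr (- \<beta>)))) {0..}"
    by (intro has_integral_sum F has_integral_mult_right has_integral_inverse_multiquadric \<beta>)
  have integrand: "(\<Sum>j\<in>F. \<Sum>k\<in>F. u j * u k * (t powr (\<beta> - 1) * exp (- t) * exp (- (t * (s j k)\<^sup>2))))
      = t powr (\<beta> - 1) * exp (- t) * Q t" for t
    by (simp add: Q_def sum_distrib_left mult_ac)
  have I2: "((\<lambda>t. if t \<in> {T..T + 1} then \<kappa> * L else 0) has_integral \<kappa> * L) {0..}"
    using has_integral_const_real[of "\<kappa> * L" T "T + 1"] T by (subst has_integral_restrict) auto
  have le: "(if t \<in> {T..T + 1} then \<kappa> * L else 0) \<le> t powr (\<beta> - 1) * exp (- t) * Q t"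
    if t: "t \<in> {0..}" for t
  proof (cases "t \<in> {T..T + 1}")
    case False
    have "0 \<le> t powr (\<beta> - 1) * exp (- t) * Q t"
      using psd[of t] t by (simp add: Q_def)
    then show ?thesis
      unfolding if_not_P[OF False] .
  next
    case True
    then have tT: "T \<le> t" "t \<le> T + 1" by auto
    have "min (T powr (\<beta> - 1)) ((T + 1) powr (\<beta> - 1)) \<le> t powr (\<beta> - 1)"
    proof (cases "\<beta> - 1 \<ge> 0")
      case True
      then show ?thesis using powr_mono2[OF True, of T t] T tT by simp
    next
      case False
      then show ?thesis using powr_mono2'[of "\<beta> - 1" t "T + 1"] T tT by simp
    qed
    moreover have "exp (- (T + 1)) \<le> exp (- t)" using tT by simp
    ultimately have "\<kappa> \<le> t powr (\<beta> - 1) * exp (- t)"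
      unfolding \<kappa>_def using T by (intro mult_mono) auto
    then have "\<kappa> * L \<le> t powr (\<beta> - 1) * exp (- t) * Q t"
      using lower[OF tT] \<kappa> L by (intro mult_mono) (auto simp: Q_def)
    then show ?thesis using True by simp
  qed
  have "\<kappa> * L \<le> Gamma \<beta> * (\<Sum>j\<in>F. \<Sum>k\<in>F. u j * u k * (1 + (s j k)\<^sup>2) powr (- \<beta>))"
    using has_integral_le[OF I2 I1 le[unfolded integrand[symmetric]]] by (simp add: sum_distrib_left mult_ac)
  then show ?thesis
    using Gamma_real_pos[OF \<beta>] by (simp add: \<kappa>_def field_simps)
qed

section \<open>Separated sequences\<close>

locale separated_sequence =
  fixes x :: "nat \<Rightarrow> real ^ 'n" and d :: nat and \<delta> :: real
  assumes dim_span: "dim (span (range x)) = d"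
    and d_pos: "1 \<le> d"
    and \<delta>_pos: "\<delta> > 0"
    and separated: "k \<noteq> l \<Longrightarrow> \<delta> \<le> dist (x k) (x l)"
begin

text \<open>The span of the points is mapped isometrically onto a coordinate subspace of a space of
  type \<open>real ^ 'n bit0\<close>: its index type is well-ordered, as the change of variables formula
  for linear maps requires, and it has at least d coordinates.\<close>
lemma card_ball_le:
  assumes r: "r \<ge> 0"
  shows "finite {k. dist (x k) (x j) \<le> r}"
    and "real (card {k. dist (x k) (x j) \<le> r}) \<le> (1 + 3 * r / \<delta>) ^ d"
proof -
  have "d \<le> CARD('n)"
    using dim_span dim_subset_UNIV_cart[of "span (range x)"] by simp
  then have "d \<le> card (UNIV :: 'n bit0 set)"
    by simp
  then obtain D :: "'n bit0 set" where D: "card D = d"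
    using obtain_subset_with_card_n by blast
  define T where "T = {z :: real ^ 'n bit0. \<forall>i. i \<notin> D \<longrightarrow> z $ i = 0}"
  have "vec.dim T = card D"
    unfolding T_def by (rule dim_substandard_cart)
  then have "dim (span (range x)) = dim T"
    using D dim_span dim_vec_eq[of T] by simp
  moreover have "subspace T"
    by (auto simp: T_def subspace_def)
  ultimately obtain f where f: "linear f" "f ` span (range x) = T"
    and isometry: "\<And>v. v \<in> span (range x) \<Longrightarrow> norm (f v) = norm v"
    by (metis isometry_subspaces subspace_span)
  have fx: "f (x k) $ i = 0" if "i \<notin> D" for k i
    using f(2) span_base[of "x k" "range x"] that by (auto simp: T_def)
  have dist_f: "dist (f (x k)) (f (x l)) = dist (x k) (x l)" for k l
    using isometry[OF span_diff[OF span_base span_base]]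
    by (simp add: dist_norm linear_diff[OF f(1)])
  define A where "A = {k. dist (x k) (x j) \<le> r}"
  have card_le: "real (card F) \<le> (1 + 3 * r / \<delta>) ^ d" if F: "finite F" "F \<subseteq> A" for F
  proof -
    have "real (card F) * (\<delta> / 3) ^ card D \<le> (r + \<delta> / 3) ^ card D"
      using fx \<delta>_pos r F separated by (intro card_packing_le) (auto simp: dist_f A_def)
    moreover have "r + \<delta> / 3 = (1 + 3 * r / \<delta>) * (\<delta> / 3)"
      using \<delta>_pos by (simp add: field_simps)
    ultimately have "real (card F) * (\<delta> / 3) ^ d \<le> (1 + 3 * r / \<delta>) ^ d * (\<delta> / 3) ^ d"
      using D by (simp only: power_mult_distrib)
    then show ?thesis
      using \<delta>_pos by simp
  qed
  show fin: "finite {k. dist (x k) (x j) \<le> r}"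
  proof (rule ccontr)
    assume "infinite {k. dist (x k) (x j) \<le> r}"
    then obtain F where "F \<subseteq> A" "finite F" "card F = Suc (nat \<lceil>(1 + 3 * r / \<delta>) ^ d\<rceil>)"
      using infinite_arbitrarily_large unfolding A_def by blast
    then show False
      using card_le[of F] by linarith
  qed
  show "real (card {k. dist (x k) (x j) \<le> r}) \<le> (1 + 3 * r / \<delta>) ^ d"
    using card_le[OF fin] by (simp add: A_def)
qed

lemma card_close_le:
  assumes G: "finite G" "j \<notin> G" and u: "u \<ge> 0"
  shows "real (card {k\<in>G. (norm (x j - x k))\<^sup>2 \<le> u}) \<le> ((5 ^ d - 1) / \<delta> ^ d) * u powr (real d / 2)"
proof (cases "u < \<delta>\<^sup>2")
  case True
  have "\<delta>\<^sup>2 \<le> (norm (x j - x k))\<^sup>2" if "k \<in> G" for k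
    using separated[of j k] G that \<delta>_pos by (intro power_mono) (auto simp: dist_norm)
  then have "u < (norm (x j - x k))\<^sup>2" if "k \<in> G" for k
    using True that by fastforce
  then have empty: "{k\<in>G. (norm (x j - x k))\<^sup>2 \<le> u} = {}"
    by (auto simp: not_le)
  have "0 \<le> ((5 ^ d - 1) / \<delta> ^ d) * u powr (real d / 2)"
    using \<delta>_pos by (intro mult_nonneg_nonneg divide_nonneg_pos) auto
  then show ?thesis
    unfolding empty by simp
next
  case False
  define \<rho> where "\<rho> = sqrt u / \<delta>"
  have "\<delta> \<le> sqrt u"
    using False \<delta>_pos by (simp add: real_le_rsqrt)
  then have \<rho>: "\<rho> \<ge> 1"
    using \<delta>_pos by (simp add: \<rho>_def)
  have "real (card {k\<in>G. (norm (x j - x k))\<^sup>2 \<le> u}) \<le> real (card {k. dist (x k) (x j) \<le> sqrt u})"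
    using card_ball_le(1)[of "sqrt u" j] u
    by (intro of_nat_mono card_mono) (auto simp: dist_norm norm_minus_commute real_le_rsqrt)
  also have "\<dots> \<le> (1 + 3 * \<rho>) ^ d"
    using card_ball_le(2)[of "sqrt u" j] u by (simp add: \<rho>_def)
  also have "\<dots> \<le> (4 * \<rho>) ^ d"
    using \<rho> by (intro power_mono) auto
  also have "\<dots> \<le> (5 ^ d - 1) * \<rho> ^ d"
  proof -
    have "(4::nat) ^ d < 5 ^ d"
      using d_pos by (intro power_strict_mono) auto
    then have "real (4 ^ d) \<le> real (5 ^ d) - 1"
      by linarith
    then show ?thesis
      using \<rho> by (simp add: power_mult_distrib mult_right_mono)
  qed
  also have "\<rho> ^ d = u powr (real d / 2) / \<delta> ^ d"
  proof -
    have "u > 0"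
      using False \<delta>_pos by (smt (verit) zero_less_power)
    then have "(sqrt u) ^ d = u powr (real d / 2)"
      by (simp add: powr_half_sqrt[symmetric] powr_realpow[symmetric] powr_powr)
    then show ?thesis
      by (simp add: \<rho>_def power_divide)
  qed
  finally show ?thesis
    by simp
qed

lemma sum_phi_row_le:
  assumes \<beta>: "\<beta> > real d / 2" and G: "finite G" "j \<notin> G"
  shows "(\<Sum>k\<in>G. phi_beta \<beta> (norm (x j - x k)))
    \<le> real d * (5 ^ d - 1) * Beta (\<beta> - real d / 2) (real d / 2) / (2 * \<delta> ^ d)"
proof -
  have d: "real d / 2 > 0"
    using d_pos by simp
  have "(\<Sum>k\<in>G. (1 + (norm (x j - x k))\<^sup>2) powr (- \<beta>))
      \<le> ((5 ^ d - 1) / \<delta> ^ d) * Gamma (real d / 2 + 1) * Gamma (\<beta> - real d / 2) / Gamma \<beta>"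
    by (rule sum_inverse_multiquadric_le_of_counting_bound[OF G(1) card_close_le[OF G] d \<beta>])
  also have "Gamma (real d / 2 + 1) = real d / 2 * Gamma (real d / 2)"
    using d by (intro Gamma_plus1) (auto elim!: nonpos_Ints_cases)
  finally show ?thesis
    by (simp add: phi_beta_def Beta_def field_simps)
qed

lemma gaussian_quadratic_form_ge:
  assumes F: "finite F" and t: "t > 0"
    and small: "((5 ^ d - 1) / \<delta> ^ d) * Gamma (real d / 2 + 1) * t powr (- (real d / 2)) \<le> 1 / 2"
  shows "(1 / 2) * (\<Sum>j\<in>F. (u j)\<^sup>2) \<le> (\<Sum>j\<in>F. \<Sum>k\<in>F. u j * u k * exp (- (t * (norm (x j - x k))\<^sup>2)))"
proof -
  define \<epsilon> where "\<epsilon> = ((5 ^ d - 1) / \<delta> ^ d) * Gamma (real d / 2 + 1) * t powr (- (real d / 2))"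
  define h where "h j k = (if j = k then 0 else exp (- (t * (norm (x j - x k))\<^sup>2)))" for j k
  have "(\<Sum>k\<in>F. h j k) \<le> \<epsilon>" if j: "j \<in> F" for j
  proof -
    have "(\<Sum>k\<in>F. h j k) = (\<Sum>k\<in>F - {j}. exp (- (t * (norm (x j - x k))\<^sup>2)))"
      using F j by (simp add: h_def sum.If_cases Diff_eq Int_commute)
    also have "\<dots> \<le> \<epsilon>"
      unfolding \<epsilon>_def using F d_pos t card_close_le[of "F - {j}" j]
      by (intro sum_exp_le_of_counting_bound[where s = "\<lambda>k. norm (x j - x k)"]) auto
    finally show ?thesis .
  qed
  then have "- (\<epsilon> * (\<Sum>j\<in>F. (u j)\<^sup>2)) \<le> (\<Sum>j\<in>F. \<Sum>k\<in>F. u j * u k * h j k)"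
    by (intro quadratic_form_ge_of_row_sums[OF F]) (auto simp: h_def norm_minus_commute)
  moreover have "\<epsilon> * (\<Sum>j\<in>F. (u j)\<^sup>2) \<le> (1 / 2) * (\<Sum>j\<in>F. (u j)\<^sup>2)"
    using small by (intro mult_right_mono) (auto simp: \<epsilon>_def intro: sum_nonneg)
  moreover have "(\<Sum>j\<in>F. \<Sum>k\<in>F. u j * u k * exp (- (t * (norm (x j - x k))\<^sup>2)))
      = (\<Sum>j\<in>F. (u j)\<^sup>2) + (\<Sum>j\<in>F. \<Sum>k\<in>F. u j * u k * h j k)"
  proof -
    have "exp (- (t * (norm (x j - x k))\<^sup>2)) = (if j = k then 1 else 0) + h j k" for j k
      by (simp add: h_def)
    then have "(\<Sum>j\<in>F. \<Sum>k\<in>F. u j * u k * exp (- (t * (norm (x j - x k))\<^sup>2)))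
        = (\<Sum>j\<in>F. \<Sum>k\<in>F. u j * u k * (if j = k then 1 else 0)) + (\<Sum>j\<in>F. \<Sum>k\<in>F. u j * u k * h j k)"
      by (simp only: distrib_left sum.distrib)
    also have "(\<Sum>j\<in>F. \<Sum>k\<in>F. u j * u k * (if j = k then 1 else 0)) = (\<Sum>j\<in>F. (u j)\<^sup>2)"
      using F by (simp add: power2_eq_square if_distrib sum.delta cong: if_cong)
    finally show ?thesis .
  qed
  ultimately show ?thesis
    by linarith
qed

text \<open>For t beyond the threshold T the Gaussian kernel is diagonally dominant; averaging over
  [T, T + 1] transfers the resulting lower bound to the subordinated kernel phi_beta.\<close>
lemma phi_quadratic_form_ge:
  assumes \<beta>: "\<beta> > real d / 2"
  obtains c where "c > 0"
    and "\<And>N u. c * (\<Sum>j<N. (u j)\<^sup>2) \<le> (\<Sum>j<N. \<Sum>k<N. u j * u k * phi_beta \<beta> (norm (x j - x k)))"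
proof -
  define K where "K = ((5 ^ d - 1) / \<delta> ^ d) * Gamma (real d / 2 + 1)"
  have K: "K \<ge> 0"
    unfolding K_def using \<delta>_pos by (intro mult_nonneg_nonneg divide_nonneg_pos Gamma_real_nonneg) auto
  define T where "T = 1 + (2 * K) powr (2 / real d)"
  have T: "T \<ge> 1"
    by (simp add: T_def)
  have small: "K * t powr (- (real d / 2)) \<le> 1 / 2" if t: "t \<ge> T" for t
  proof -
    have "2 * K = ((2 * K) powr (2 / real d)) powr (real d / 2)"
      using K d_pos by (simp add: powr_powr)
    also have "\<dots> \<le> t powr (real d / 2)"
      using t T by (intro powr_mono2) (auto simp: T_def)
    finally have "K * t powr (- (real d / 2)) \<le> (1 / 2) * t powr (real d / 2) * t powr (- (real d / 2))"
      by (intro mult_right_mono) auto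
    also have "\<dots> = 1 / 2"
      using t T by (simp add: powr_add[symmetric])
    finally show ?thesis .
  qed
  have \<beta>_pos: "\<beta> > 0"
    using \<beta> by (smt (verit) divide_nonneg_nonneg of_nat_0_le_iff)
  define c where "c = min (T powr (\<beta> - 1)) ((T + 1) powr (\<beta> - 1)) * exp (- (T + 1)) * (1 / 2) / Gamma \<beta>"
  show ?thesis
  proof
    show "c > 0"
      using T Gamma_real_pos[OF \<beta>_pos] by (simp add: c_def)
    show "c * (\<Sum>j<N. (u j)\<^sup>2) \<le> (\<Sum>j<N. \<Sum>k<N. u j * u k * phi_beta \<beta> (norm (x j - x k)))" for N u
    proof -
      have "c * (\<Sum>j<N. (u j)\<^sup>2)
          = min (T powr (\<beta> - 1)) ((T + 1) powr (\<beta> - 1)) * exp (- (T + 1)) * ((1 / 2) * (\<Sum>j<N. (u j)\<^sup>2)) / Gamma \<beta>"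
        by (simp add: c_def)
      also have "\<dots> \<le> (\<Sum>j<N. \<Sum>k<N. u j * u k * (1 + (norm (x j - x k))\<^sup>2) powr (- \<beta>))"
      proof (rule quadratic_form_inverse_multiquadric_ge[OF finite_lessThan \<beta>_pos])
        show "0 \<le> (\<Sum>j<N. \<Sum>k<N. u j * u k * exp (- (t * (norm (x j - x k))\<^sup>2)))" if "t \<ge> 0" for t
          using that by (rule quadratic_form_gaussian_nonneg[OF finite_lessThan])
        show "(1 / 2) * (\<Sum>j<N. (u j)\<^sup>2) \<le> (\<Sum>j<N. \<Sum>k<N. u j * u k * exp (- (t * (norm (x j - x k))\<^sup>2)))"
          if "T \<le> t" for t
          using that T small[OF that] by (intro gaussian_quadratic_form_ge) (auto simp: K_def)
      qed (use T in \<open>auto intro: sum_nonneg\<close>)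
      finally show ?thesis
        by (simp add: phi_beta_def)
    qed
  qed
qed

lemma coercive_schur_test_phi:
  assumes \<beta>: "\<beta> > real d / 2"
  obtains c where "coercive_schur_test (\<lambda>j k. phi_beta \<beta> (norm (x j - x k)))
    (1 + real d * (5 ^ d - 1) * Beta (\<beta> - real d / 2) (real d / 2) / (2 * \<delta> ^ d)) c"
proof -
  let ?K = "real d * (5 ^ d - 1) * Beta (\<beta> - real d / 2) (real d / 2) / (2 * \<delta> ^ d)"
  have "(\<Sum>k\<in>F. phi_beta \<beta> (norm (x j - x k))) \<le> 1 + ?K" if F: "finite F" for j F
  proof -
    have "(\<Sum>k\<in>F. phi_beta \<beta> (norm (x j - x k)))
        \<le> phi_beta \<beta> (norm (x j - x j)) + (\<Sum>k\<in>F - {j}. phi_beta \<beta> (norm (x j - x k)))"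
      using F by (cases "j \<in> F") (auto simp: sum.remove phi_beta_def intro: sum_mono2)
    also have "\<dots> \<le> 1 + ?K"
      using sum_phi_row_le[OF \<beta>, of "F - {j}" j] F by (simp add: phi_beta_def)
    finally show ?thesis .
  qed
  then interpret schur_test "\<lambda>j k. phi_beta \<beta> (norm (x j - x k))" "1 + ?K"
    by unfold_locales (auto simp: phi_beta_def norm_minus_commute)
  obtain c where "c > 0"
    and "\<And>N u. c * (\<Sum>j<N. (u j)\<^sup>2) \<le> (\<Sum>j<N. \<Sum>k<N. u j * u k * phi_beta \<beta> (norm (x j - x k)))"
    using phi_quadratic_form_ge[OF \<beta>] by blast
  then show ?thesis
    by (intro that) unfold_locales
qed

end

theorem theorem5p3:
  fixes x :: "nat \<Rightarrow> real ^ 'n" and \<beta> :: real and d :: nat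
  assumes beta: "\<beta> > real CARD('n) / 2"
    and inj: "inj x"
    and sep: "sep_dist x > 0"
    and dimX: "dim (span (range x)) = d"
    and d: "1 \<le> d" "d \<le> CARD('n)"
  shows "bounded_mat_op (S_mat \<beta> x)
           (1 + real d * (5 ^ d - 1) * Beta (\<beta> - real d / 2) (real d / 2)
                / (2 * sep_dist x ^ d))
       \<and> selfadjoint_mat_op (S_mat \<beta> x)
       \<and> (CARD('n) \<ge> 2 \<longrightarrow> invertible_mat_op (S_mat \<beta> x))
       \<and> (CARD('n) = 1 \<and> d = 1 \<and> sep_dist x > 2 * Beta (\<beta> - 1/2) (1/2)
            \<longrightarrow> invertible_mat_op (S_mat \<beta> x))"
proof -
  have "sep_dist x \<le> dist (x k) (x l)" if "k \<noteq> l" for k l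
    unfolding sep_dist_def using that by (intro cInf_lower) (auto intro: bdd_belowI[of _ 0])
  then interpret separated_sequence x d "sep_dist x"
    using dimX d(1) sep by unfold_locales auto
  have "\<beta> > real d / 2"
    using beta d(2) by (smt (verit) divide_right_mono of_nat_le_iff)
  then obtain c where "coercive_schur_test (\<lambda>j k. phi_beta \<beta> (norm (x j - x k)))
      (1 + real d * (5 ^ d - 1) * Beta (\<beta> - real d / 2) (real d / 2) / (2 * sep_dist x ^ d)) c"
    by (rule coercive_schur_test_phi)
  then interpret coercive_schur_test "\<lambda>j k. phi_beta \<beta> (norm (x j - x k))"
    "1 + real d * (5 ^ d - 1) * Beta (\<beta> - real d / 2) (real d / 2) / (2 * sep_dist x ^ d)" c .
  have "S_mat \<beta> x = M"
    by (simp add: S_mat_def M_def fun_eq_iff)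
  then show ?thesis
    using bounded_mat_op_M selfadjoint_mat_op_M invertible_mat_op_M by simp
qed

end
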